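(* Let $D$ be a domain in a metric measure space $(X,d,\mu)$ of finite Hausdorff dimension $\alpha\geqslant2$ and let $(X',d',\mu')$ be a metric measure space of finite Hausdorff dimension $\alpha'\geqslant2$. Let $Q:D\to[0,\infty]$ be measurable, let $f:D\to X'$ be an open discrete mapping which is a ring $Q$-mapping at $x_0\in D$, and let $0<\varepsilon_0<\operatorname{dist}(x_0,\partial D)$ be such that $\overline{B(x_0,\varepsilon_0)}$ is a compact subset of $D$. Assume that for some $\varepsilon_0'\in(0,\varepsilon_0)$, some function $F(\varepsilon,\varepsilon_0)$ and some family of nonnegative Lebesgue measurable functions $\psi_\varepsilon:(\varepsilon,\varepsilon_0)\to[0,\infty]$, $\varepsilon\in(0,\varepsilon_0')$, $\int_{\varepsilon<d(x,x_0)<\varepsilon_0}Q(x)\psi_\varepsilon^\alpha(d(x,x_0))\,d\mu(x)\leqslant F(\varepsilon,\varepsilon_0)$ and $0<I(\varepsilon,\varepsilon_0):=\int_\varepsilon^{\varepsilon_0}\psi_\varepsilon(t)\,dt<\infty$ for all $\varepsilon\in(0,\varepsilon_0')$. If $f$ satisfies condition $\mathbf{A}$, then $M_{\alpha'}\big(\Gamma(f(\overline{B(x_0,\varepsilon)}),\partial f(B(x_0,\varepsilon_0)),X')\big)\leqslant F(\varepsilon,\varepsilon_0)/I^\alpha(\varepsilon,\varepsilon_0)$ for all $\varepsilon\in(0,\varepsilon_0')$.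
   Context: $(X,d,\mu)$, $(X',d',\mu')$ are metric spaces with locally finite Borel measures. $B(x_0,r)=\{x:d(x,x_0)<r\}$, $S(x_0,r)=\{x:d(x,x_0)=r\}$, $A(x_0,r_1,r_2)=\{x:r_1<d(x,x_0)<r_2\}$. $\Gamma(E,F,H)$ is the family of continuous curves $\gamma:[0,1]\to X$ (resp. $X'$) with $\gamma(0)\in E$, $\gamma(1)\in F$, $\gamma(t)\in H$ for $t\in(0,1)$. A Borel $\rho\geqslant0$ is admissible for $\Gamma$ if $\int_\gamma\rho\,ds\geqslant1$ for each locally rectifiable $\gamma\in\Gamma$; $M_{\alpha'}(\Gamma)=\inf_\rho\int_{X'}\rho^{\alpha'}d\mu'$. $f:D\to X'$ is a ring $Q$-mapping at $x_0$ if for all $0<r_1<r_2<\infty$ and every Lebesgue measurable $\eta:(r_1,r_2)\to[0,\infty]$ with $\int_{r_1}^{r_2}\eta\,dr\geqslant1$: $M_{\alpha'}(f(\Gamma(S(x_0,r_1),S(x_0,r_2),A(x_0,r_1,r_2))))\leqslant\int_{A(x_0,r_1,r_2)\cap D}Q(x)\eta^\alpha(d(x,x_0))\,d\mu(x)$. A mapping is discrete if preimages of points are discrete sets, open if it maps open sets to open sets. For an open discrete $f:D\to X'$, a curve $\beta:[a,b)\to X'$ and $x\in f^{-1}(\beta(a))$, a curve $\alpha:[a,c)\to D$ is a maximal $f$-lifting of $\beta$ starting at $x$ if $\alpha(a)=x$, $f\circ\alpha=\beta|_{[a,c)}$, and for no $c<c'\leqslant b$ is there a curve $\alpha':[a,c')\to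 D$ with $\alpha=\alpha'|_{[a,c)}$ and $f\circ\alpha'=\beta|_{[a,c')}$. Condition $\mathbf{A}$: for every curve $\beta:[a,b)\to X'$ and every $x\in f^{-1}(\beta(a))$, $f$ has a maximal $f$-lifting of $\beta$ starting at $x$. *)

theory Defs
  imports "HOL-Analysis.Analysis"
begin

definition hcost :: "real \<Rightarrow> 'a::metric_space set \<Rightarrow> ennreal" where
  "hcost s U = (if U = {} then 0 else if s = 0 then 1 else ennreal (diameter U powr s))"

definition hausdorff_content :: "real \<Rightarrow> real \<Rightarrow> 'a::metric_space set \<Rightarrow> ennreal" where
  "hausdorff_content s \<delta> A =
     (INF U \<in> {U :: nat \<Rightarrow> 'a set. A \<subseteq> (\<Union>i. U i) \<and> (\<forall>i. bounded (U i) \<and> diameter (U i) < \<delta>)}.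
        (\<Sum>i. hcost s (U i)))"

definition hausdorff_measure :: "real \<Rightarrow> 'a::metric_space set \<Rightarrow> ennreal" where
  "hausdorff_measure s A = (SUP \<delta> \<in> {0<..}. hausdorff_content s \<delta> A)"

definition hausdorff_dim :: "'a::metric_space set \<Rightarrow> ereal" where
  "hausdorff_dim A = Inf {ereal s | s. 0 \<le> s \<and> hausdorff_measure s A = 0}"

definition locally_finite_borel :: "'a::metric_space measure \<Rightarrow> bool" where
  "locally_finite_borel \<mu> \<longleftrightarrow> sets \<mu> = sets borel \<and>
     (\<forall>x. \<exists>r>0. emeasure \<mu> (ball x r) < \<infinity>)"

definition curve_length :: "(real \<Rightarrow> 'a::metric_space) \<Rightarrow> real \<Rightarrow> real \<Rightarrow> ennreal" where
  "curve_length \<gamma> a b = (SUP p \<in> {(n, t). t 0 = a \<and> t n = b \<and> (\<forall>i<n. t i \<le> t (Suc i))}.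
      (case p of (n, t) \<Rightarrow> (\<Sum>i<n. ennreal (dist (\<gamma> (t i)) (\<gamma> (t (Suc i)))))))"

definition loc_rectifiable :: "(real \<Rightarrow> 'a::metric_space) \<Rightarrow> bool" where
  "loc_rectifiable \<gamma> \<longleftrightarrow> (\<forall>a b. 0 \<le> a \<and> a \<le> b \<and> b \<le> 1 \<longrightarrow> curve_length \<gamma> a b < \<infinity>)"

definition arclen_fun :: "(real \<Rightarrow> 'a::metric_space) \<Rightarrow> real \<Rightarrow> real" where
  "arclen_fun \<gamma> t = enn2real (curve_length \<gamma> 0 t)"

definition arc_param :: "(real \<Rightarrow> 'a::metric_space) \<Rightarrow> real \<Rightarrow> 'a" where
  "arc_param \<gamma> s = \<gamma> (SOME t. t \<in> {0..1} \<and> arclen_fun \<gamma> t = s)"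

definition line_integral :: "('a::metric_space \<Rightarrow> ennreal) \<Rightarrow> (real \<Rightarrow> 'a) \<Rightarrow> ennreal" where
  "line_integral \<rho> \<gamma> = (\<integral>\<^sup>+ s \<in> {0..arclen_fun \<gamma> 1}. \<rho> (arc_param \<gamma> s) \<partial>lborel)"

definition curve_family :: "'a::metric_space set \<Rightarrow> 'a set \<Rightarrow> 'a set \<Rightarrow> (real \<Rightarrow> 'a) set" where
  "curve_family E F H = {\<gamma>. continuous_on {0..1} \<gamma> \<and> \<gamma> 0 \<in> E \<and> \<gamma> 1 \<in> F \<and>
       (\<forall>t\<in>{0<..<1}. \<gamma> t \<in> H)}"

definition epow :: "ennreal \<Rightarrow> real \<Rightarrow> ennreal" where
  "epow x p = (if x = \<infinity> then \<infinity> else ennreal (enn2real x powr p))"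

definition admissible :: "('a::metric_space \<Rightarrow> ennreal) \<Rightarrow> (real \<Rightarrow> 'a) set \<Rightarrow> bool" where
  "admissible \<rho> \<Gamma> \<longleftrightarrow> \<rho> \<in> borel_measurable borel \<and>
     (\<forall>\<gamma>\<in>\<Gamma>. loc_rectifiable \<gamma> \<longrightarrow> line_integral \<rho> \<gamma> \<ge> 1)"

definition modulus :: "'a::metric_space measure \<Rightarrow> real \<Rightarrow> (real \<Rightarrow> 'a) set \<Rightarrow> ennreal" where
  "modulus \<mu> p \<Gamma> = (INF \<rho> \<in> {\<rho>. admissible \<rho> \<Gamma>}. \<integral>\<^sup>+ x. epow (\<rho> x) p \<partial>\<mu>)"

definition image_family :: "('a \<Rightarrow> 'b) \<Rightarrow> 'a set \<Rightarrow> (real \<Rightarrow> 'a) set \<Rightarrow> (real \<Rightarrow> 'b) set" where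
  "image_family f D \<Gamma> = (\<lambda>\<gamma>. f \<circ> \<gamma>) ` {\<gamma>\<in>\<Gamma>. \<gamma> ` {0..1} \<subseteq> D}"

definition sphere_set :: "'a::metric_space \<Rightarrow> real \<Rightarrow> 'a set" where
  "sphere_set x0 r = {x. dist x x0 = r}"

definition annulus :: "'a::metric_space \<Rightarrow> real \<Rightarrow> real \<Rightarrow> 'a set" where
  "annulus x0 r1 r2 = {x. r1 < dist x x0 \<and> dist x x0 < r2}"

definition ring_Q_mapping ::
  "'a::metric_space measure \<Rightarrow> real \<Rightarrow> 'b::metric_space measure \<Rightarrow> real \<Rightarrow>
   'a set \<Rightarrow> ('a \<Rightarrow> 'b) \<Rightarrow> ('a \<Rightarrow> ennreal) \<Rightarrow> 'a \<Rightarrow> bool" where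
  "ring_Q_mapping \<mu> \<alpha> \<mu>' \<alpha>' D f Q x0 \<longleftrightarrow>
     (\<forall>r1 r2 (\<eta>::real \<Rightarrow> ennreal). 0 < r1 \<and> r1 < r2 \<and> \<eta> \<in> borel_measurable lebesgue \<and>
        (\<integral>\<^sup>+ r \<in> {r1<..<r2}. \<eta> r \<partial>lebesgue) \<ge> 1 \<longrightarrow>
        modulus \<mu>' \<alpha>' (image_family f D
            (curve_family (sphere_set x0 r1) (sphere_set x0 r2) (annulus x0 r1 r2)))
          \<le> (\<integral>\<^sup>+ x \<in> annulus x0 r1 r2 \<inter> D. Q x * epow (\<eta> (dist x x0)) \<alpha> \<partial>\<mu>))"

definition discrete_map :: "'a::metric_space set \<Rightarrow> ('a \<Rightarrow> 'b) \<Rightarrow> bool" where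
  "discrete_map D f \<longleftrightarrow> (\<forall>y. \<forall>x \<in> D \<inter> f -` {y}. \<exists>r>0. ball x r \<inter> (D \<inter> f -` {y}) = {x})"

definition open_map_on :: "'a::topological_space set \<Rightarrow> ('a \<Rightarrow> 'b::topological_space) \<Rightarrow> bool" where
  "open_map_on D f \<longleftrightarrow> (\<forall>U. open U \<and> U \<subseteq> D \<longrightarrow> open (f ` U))"

definition is_lifting ::
  "'a set \<Rightarrow> ('a \<Rightarrow> 'b::topological_space) \<Rightarrow> (real \<Rightarrow> 'b) \<Rightarrow> real \<Rightarrow> real \<Rightarrow> (real \<Rightarrow> 'a::topological_space) \<Rightarrow> bool" where
  "is_lifting D f \<beta> a c \<alpha> \<longleftrightarrow> continuous_on {a..<c} \<alpha> \<and> \<alpha> ` {a..<c} \<subseteq> D \<and>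
      (\<forall>t\<in>{a..<c}. f (\<alpha> t) = \<beta> t)"

definition max_lifting ::
  "'a set \<Rightarrow> ('a \<Rightarrow> 'b::topological_space) \<Rightarrow> (real \<Rightarrow> 'b) \<Rightarrow> real \<Rightarrow> real \<Rightarrow> 'a \<Rightarrow> real \<Rightarrow> (real \<Rightarrow> 'a::topological_space) \<Rightarrow> bool" where
  "max_lifting D f \<beta> a b x c \<alpha> \<longleftrightarrow> a < c \<and> c \<le> b \<and> \<alpha> a = x \<and> is_lifting D f \<beta> a c \<alpha> \<and>
     \<not> (\<exists>c' \<alpha>'. c < c' \<and> c' \<le> b \<and> is_lifting D f \<beta> a c' \<alpha>' \<and> (\<forall>t\<in>{a..<c}. \<alpha>' t = \<alpha> t))"

definition condition_A :: "'a::topological_space set \<Rightarrow> ('a \<Rightarrow> 'b::topological_space) \<Rightarrow> bool" where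
  "condition_A D f \<longleftrightarrow> (\<forall>\<beta> a b x. a < b \<and> continuous_on {a..<b} \<beta> \<and> x \<in> D \<and> f x = \<beta> a \<longrightarrow>
      (\<exists>c \<alpha>. max_lifting D f \<beta> a b x c \<alpha>))"

end

theory Submission
  imports Defs
begin

text \<open>By condition \<open>A\<close>, a curve \<open>\<gamma>\<close> from \<open>f(cl B(x\<^sub>0, \<epsilon>))\<close> to \<open>\<partial>f(B(x\<^sub>0, \<epsilon>\<^sub>0))\<close> has a maximal
  lifting starting in \<open>cl B(x\<^sub>0, \<epsilon>)\<close>. It cannot stop inside the compact ball \<open>cl B(x\<^sub>0, \<epsilon>\<^sub>0)\<close>:
  by discreteness it would converge at its stopping time and could be continued. As
  \<open>f(B(x\<^sub>0, \<epsilon>\<^sub>0))\<close> is open, the endpoint of \<open>\<gamma>\<close> has no preimage in \<open>B(x\<^sub>0, \<epsilon>\<^sub>0)\<close>, so the lifting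
  crosses the annulus \<open>A(x\<^sub>0, \<epsilon>, \<epsilon>\<^sub>0)\<close>, and the image of the crossing piece is a subpath of
  \<open>\<gamma>\<close>. Hence every curve of the family has a subpath in the image of the annulus family, whose
  modulus is at most \<open>F / I\<^sup>\<alpha>\<close> by the ring inequality applied to \<open>\<eta> = \<psi>\<^sub>\<epsilon> / I\<close>.\<close>

section \<open>Length of curves\<close>

definition partitions :: "real \<Rightarrow> real \<Rightarrow> (nat \<times> (nat \<Rightarrow> real)) set" where
  "partitions a b = {(n, t). t 0 = a \<and> t n = b \<and> (\<forall>i<n. t i \<le> t (Suc i))}"

definition partition_sum :: "(real \<Rightarrow> 'a::metric_space) \<Rightarrow> nat \<times> (nat \<Rightarrow> real) \<Rightarrow> ennreal" where
  "partition_sum \<gamma> p = (case p of (n, t) \<Rightarrow> (\<Sum>i<n. ennreal (dist (\<gamma> (t i)) (\<gamma> (t (Suc i))))))"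

definition partition_cons :: "real \<Rightarrow> nat \<times> (nat \<Rightarrow> real) \<Rightarrow> nat \<times> (nat \<Rightarrow> real)" where
  "partition_cons x p = (case p of (m, u) \<Rightarrow> (Suc m, \<lambda>i. case i of 0 \<Rightarrow> x | Suc j \<Rightarrow> u j))"

lemma curve_length_SUP_partitions:
  "curve_length \<gamma> a b = (SUP p \<in> partitions a b. partition_sum \<gamma> p)"
  unfolding curve_length_def partitions_def partition_sum_def by simp

lemma partitions_mono:
  assumes "(n, t) \<in> partitions a b" "i \<le> j" "j \<le> n"
  shows "t i \<le> t j"
  using assms(2,3)
proof (induction j rule: dec_induct)
  case (step k)
  then have "t k \<le> t (Suc k)" using assms(1) by (auto simp: partitions_def)
  then show ?case using step by simp
qed simp

lemma partitions_range:
  assumes "(n, t) \<in> partitions a b" "i \<le> n"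
  shows "a \<le> t i" "t i \<le> b"
  using partitions_mono[OF assms(1), of 0 i] partitions_mono[OF assms(1), of i n] assms
  by (auto simp: partitions_def)

lemma partitions_le: "(n, t) \<in> partitions a b \<Longrightarrow> a \<le> b"
  using partitions_range[of n t a b n] by auto

lemma partitions_trivial: "a \<le> b \<Longrightarrow> (1, \<lambda>i. if i = 0 then a else b) \<in> partitions a b"
  by (auto simp: partitions_def)

lemma partition_sum_le_curve_length:
  "p \<in> partitions a b \<Longrightarrow> partition_sum \<gamma> p \<le> curve_length \<gamma> a b"
  unfolding curve_length_SUP_partitions by (rule SUP_upper)

lemma dist_le_curve_length: "a \<le> b \<Longrightarrow> ennreal (dist (\<gamma> a) (\<gamma> b)) \<le> curve_length \<gamma> a b"
  using partition_sum_le_curve_length[OF partitions_trivial, of a b \<gamma>]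
  by (simp add: partition_sum_def)

lemma partition_cons_partitions:
  assumes "(m, u) \<in> partitions a' c" "a \<le> a'"
  shows "partition_cons a (m, u) \<in> partitions a c"
  using assms unfolding partitions_def partition_cons_def
  by (auto simp: less_Suc_eq_0_disj)

lemma partition_sum_cons:
  "partition_sum \<gamma> (partition_cons a (m, u))
     = ennreal (dist (\<gamma> a) (\<gamma> (u 0))) + partition_sum \<gamma> (m, u)"
  unfolding partition_sum_def partition_cons_def
  by (simp only: prod.case sum.lessThan_Suc_shift nat.case)

lemma partitions_tail:
  assumes "(Suc m, t) \<in> partitions a c"
  shows "(m, \<lambda>i. t (Suc i)) \<in> partitions (t 1) c" "a \<le> t 1"
    "partition_sum \<gamma> (Suc m, t)
       = ennreal (dist (\<gamma> a) (\<gamma> (t 1))) + partition_sum \<gamma> (m, \<lambda>i. t (Suc i))"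
  using assms unfolding partitions_def partition_sum_def
  by (auto simp only: prod.case sum.lessThan_Suc_shift mem_Collect_eq One_nat_def intro: less_SucI)

lemma ennreal_dist_triangle:
  "ennreal (dist x z) \<le> ennreal (dist x y) + ennreal (dist y z)"
  by (simp add: ennreal_plus[symmetric] del: ennreal_plus) (rule dist_triangle)

lemma curve_length_cons_ge:
  assumes "a \<le> a'" "a' \<le> c"
  shows "ennreal (dist (\<gamma> a) (\<gamma> a')) + curve_length \<gamma> a' c \<le> curve_length \<gamma> a c"
proof -
  have "ennreal (dist (\<gamma> a) (\<gamma> a')) + curve_length \<gamma> a' c
      = (SUP p \<in> partitions a' c. ennreal (dist (\<gamma> a) (\<gamma> a')) + partition_sum \<gamma> p)"
    unfolding curve_length_SUP_partitions using partitions_trivial[OF assms(2)]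
    by (subst ennreal_SUP_add_right) auto
  also have "\<dots> \<le> curve_length \<gamma> a c"
  proof (rule SUP_least)
    fix p assume p: "p \<in> partitions a' c"
    obtain m u where pu: "p = (m, u)" by (cases p)
    then have "u 0 = a'" using p by (simp add: partitions_def)
    then have "ennreal (dist (\<gamma> a) (\<gamma> a')) + partition_sum \<gamma> p
        = partition_sum \<gamma> (partition_cons a (m, u))"
      by (simp add: partition_sum_cons pu)
    also have "\<dots> \<le> curve_length \<gamma> a c"
      using p pu assms by (intro partition_sum_le_curve_length partition_cons_partitions) auto
    finally show "ennreal (dist (\<gamma> a) (\<gamma> a')) + partition_sum \<gamma> p \<le> curve_length \<gamma> a c" .
  qed
  finally show ?thesis .
qed

lemma curve_length_superadditive:
  assumes "a \<le> b" "b \<le> c"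
  shows "curve_length \<gamma> a b + curve_length \<gamma> b c \<le> curve_length \<gamma> a c"
proof -
  have partition: "partition_sum \<gamma> (n, t) + curve_length \<gamma> b c \<le> curve_length \<gamma> a c"
    if "(n, t) \<in> partitions a b" for n t a
    using that
  proof (induction n arbitrary: a t)
    case 0
    then show ?case by (auto simp: partitions_def partition_sum_def)
  next
    case (Suc m)
    note tail = partitions_tail[OF Suc.prems]
    have "partition_sum \<gamma> (Suc m, t) + curve_length \<gamma> b c
        = ennreal (dist (\<gamma> a) (\<gamma> (t 1)))
          + (partition_sum \<gamma> (m, \<lambda>i. t (Suc i)) + curve_length \<gamma> b c)"
      by (simp add: tail(3) add.assoc)
    also have "\<dots> \<le> ennreal (dist (\<gamma> a) (\<gamma> (t 1))) + curve_length \<gamma> (t 1) c"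
      using Suc.IH tail(1) by (intro add_left_mono)
    also have "\<dots> \<le> curve_length \<gamma> a c"
      using tail(2) partitions_le[OF tail(1)] assms by (intro curve_length_cons_ge) auto
    finally show ?case .
  qed
  have "curve_length \<gamma> a b + curve_length \<gamma> b c
      = (SUP p \<in> partitions a b. partition_sum \<gamma> p + curve_length \<gamma> b c)"
    unfolding curve_length_SUP_partitions[of \<gamma> a b] using partitions_trivial[OF assms(1)]
    by (subst ennreal_SUP_add_left) auto
  also have "\<dots> \<le> curve_length \<gamma> a c"
    using partition by (intro SUP_least) auto
  finally show ?thesis .
qed

text \<open>A partition of \<open>[a, c]\<close> is refined by inserting the point \<open>b\<close>; the segment straddling
  \<open>b\<close> is split by the triangle inequality.\<close>
lemma curve_length_subadditive:
  assumes "a \<le> b" "b \<le> c"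
  shows "curve_length \<gamma> a c \<le> curve_length \<gamma> a b + curve_length \<gamma> b c"
proof -
  have partition: "partition_sum \<gamma> (n, t) \<le> curve_length \<gamma> a b + curve_length \<gamma> b c"
    if "(n, t) \<in> partitions a c" "a \<le> b" for n t a
    using that
  proof (induction n arbitrary: a t)
    case 0
    then show ?case by (auto simp: partitions_def partition_sum_def)
  next
    case (Suc m)
    note tail = partitions_tail[OF Suc.prems(1)]
    let ?rest = "partition_sum \<gamma> (m, \<lambda>i. t (Suc i))"
    show ?case
    proof (cases "t 1 \<le> b")
      case True
      have "partition_sum \<gamma> (Suc m, t)
          \<le> ennreal (dist (\<gamma> a) (\<gamma> (t 1))) + (curve_length \<gamma> (t 1) b + curve_length \<gamma> b c)"
        unfolding tail(3) using Suc.IH tail(1) True by (intro add_left_mono)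
      also have "\<dots> = (ennreal (dist (\<gamma> a) (\<gamma> (t 1))) + curve_length \<gamma> (t 1) b)
          + curve_length \<gamma> b c"
        by (simp add: add.assoc)
      also have "\<dots> \<le> curve_length \<gamma> a b + curve_length \<gamma> b c"
        using tail(2) True by (intro add_right_mono curve_length_cons_ge)
      finally show ?thesis .
    next
      case False
      have "partition_sum \<gamma> (Suc m, t)
          \<le> ennreal (dist (\<gamma> a) (\<gamma> b)) + (ennreal (dist (\<gamma> b) (\<gamma> (t 1))) + ?rest)"
        unfolding tail(3) add.assoc[symmetric] by (intro add_right_mono ennreal_dist_triangle)
      also have "ennreal (dist (\<gamma> b) (\<gamma> (t 1))) + ?rest
          = partition_sum \<gamma> (partition_cons b (m, \<lambda>i. t (Suc i)))"
        by (simp add: partition_sum_cons)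
      also have "\<dots> \<le> curve_length \<gamma> b c"
        using False by (intro partition_sum_le_curve_length partition_cons_partitions[OF tail(1)]) auto
      also have "ennreal (dist (\<gamma> a) (\<gamma> b)) \<le> curve_length \<gamma> a b"
        using Suc.prems(2) by (rule dist_le_curve_length)
      finally show ?thesis by (simp add: add_right_mono)
    qed
  qed
  show ?thesis unfolding curve_length_SUP_partitions[of \<gamma> a c]
    using partition assms by (intro SUP_least) auto
qed

lemma curve_length_additive:
  assumes "a \<le> b" "b \<le> c"
  shows "curve_length \<gamma> a c = curve_length \<gamma> a b + curve_length \<gamma> b c"
  using curve_length_subadditive[OF assms] curve_length_superadditive[OF assms] by (rule antisym)

lemma curve_length_cong:
  assumes "\<And>s. s \<in> {a..b} \<Longrightarrow> g s = h s"
  shows "curve_length g a b = curve_length h a b"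
  unfolding curve_length_SUP_partitions
proof (rule SUP_cong[OF refl])
  fix p assume p: "p \<in> partitions a b"
  obtain n t where p_eq: "p = (n, t)" by (cases p)
  have "g (t i) = h (t i)" if "i \<le> n" for i
    using partitions_range[of n t a b i] p p_eq assms that by simp
  then show "partition_sum g p = partition_sum h p"
    unfolding p_eq partition_sum_def by (auto intro!: sum.cong)
qed

lemma curve_length_affine:
  assumes k: "k > 0"
  shows "curve_length (\<lambda>s. \<gamma> (a + s * k)) u v = curve_length \<gamma> (a + u * k) (a + v * k)"
  unfolding curve_length_SUP_partitions
proof (rule antisym)
  show "(SUP p\<in>partitions u v. partition_sum (\<lambda>s. \<gamma> (a + s * k)) p)
      \<le> (SUP p\<in>partitions (a + u * k) (a + v * k). partition_sum \<gamma> p)"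
  proof (rule SUP_mono)
    fix p assume p: "p \<in> partitions u v"
    obtain n t where p_eq: "p = (n, t)" by (cases p)
    have "(n, \<lambda>i. a + t i * k) \<in> partitions (a + u * k) (a + v * k)"
      using p p_eq k by (auto simp: partitions_def intro: mult_right_mono)
    moreover have "partition_sum (\<lambda>s. \<gamma> (a + s * k)) p = partition_sum \<gamma> (n, \<lambda>i. a + t i * k)"
      by (simp add: p_eq partition_sum_def)
    ultimately show "\<exists>q\<in>partitions (a + u * k) (a + v * k).
        partition_sum (\<lambda>s. \<gamma> (a + s * k)) p \<le> partition_sum \<gamma> q"
      by force
  qed
  show "(SUP p\<in>partitions (a + u * k) (a + v * k). partition_sum \<gamma> p)
      \<le> (SUP p\<in>partitions u v. partition_sum (\<lambda>s. \<gamma> (a + s * k)) p)"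
  proof (rule SUP_mono)
    fix p assume p: "p \<in> partitions (a + u * k) (a + v * k)"
    obtain n t where p_eq: "p = (n, t)" by (cases p)
    have "(n, \<lambda>i. (t i - a) / k) \<in> partitions u v"
      using p p_eq k by (auto simp: partitions_def intro: divide_right_mono)
    moreover have "partition_sum \<gamma> p = partition_sum (\<lambda>s. \<gamma> (a + s * k)) (n, \<lambda>i. (t i - a) / k)"
      using k by (simp add: p_eq partition_sum_def)
    ultimately show "\<exists>q\<in>partitions u v.
        partition_sum \<gamma> p \<le> partition_sum (\<lambda>s. \<gamma> (a + s * k)) q"
      by force
  qed
qed

lemma curve_length_reflect_le:
  "curve_length (\<lambda>s. \<gamma> (- s)) u v \<le> curve_length \<gamma> (- v) (- u)"
  unfolding curve_length_SUP_partitions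
proof (rule SUP_mono)
  fix p assume p: "p \<in> partitions u v"
  obtain n t where p_eq: "p = (n, t)" by (cases p)
  have "(n, \<lambda>i. - t (n - i)) \<in> partitions (- v) (- u)"
  proof -
    have "t (n - Suc i) \<le> t (n - i)" if "i < n" for i
      using partitions_mono[of n t u v "n - Suc i" "n - i"] p p_eq that by simp
    then show ?thesis using p p_eq by (auto simp: partitions_def)
  qed
  moreover have "partition_sum (\<lambda>s. \<gamma> (- s)) p = partition_sum \<gamma> (n, \<lambda>i. - t (n - i))"
    unfolding p_eq partition_sum_def prod.case
    by (subst sum.nat_diff_reindex[symmetric]) (auto simp: Suc_diff_Suc dist_commute intro!: sum.cong)
  ultimately show "\<exists>q\<in>partitions (- v) (- u). partition_sum (\<lambda>s. \<gamma> (- s)) p \<le> partition_sum \<gamma> q"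
    by force
qed

lemma curve_length_reflect:
  "curve_length (\<lambda>s. \<gamma> (- s)) u v = curve_length \<gamma> (- v) (- u)"
  using curve_length_reflect_le[of \<gamma> u v] curve_length_reflect_le[of "\<lambda>s. \<gamma> (- s)" "- v" "- u"]
  by (simp add: antisym)

lemma curve_length_refl: "curve_length \<gamma> a a = 0"
proof -
  have "partition_sum \<gamma> (n, t) = 0" if "(n, t) \<in> partitions a a" for n t
  proof -
    have "t i = a" if "i \<le> n" for i
      using partitions_range[OF \<open>(n, t) \<in> partitions a a\<close> that] by simp
    then show ?thesis by (simp add: partition_sum_def)
  qed
  then show ?thesis unfolding curve_length_SUP_partitions by (auto intro: SUP_eqI)
qed

lemma curve_length_mono:
  assumes "a \<le> b" "b \<le> c"
  shows "curve_length \<gamma> a b \<le> curve_length \<gamma> a c" "curve_length \<gamma> b c \<le> curve_length \<gamma> a c"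
  using curve_length_additive[OF assms, of \<gamma>] by (simp_all add: le_iff_add add.commute)

lemma curve_length_finite_subinterval:
  assumes "curve_length \<gamma> a d < \<infinity>" "a \<le> b" "b \<le> c" "c \<le> d"
  shows "curve_length \<gamma> b c < \<infinity>"
  using curve_length_mono(1)[of b c d \<gamma>] curve_length_mono(2)[of a b d \<gamma>] assms
  by (meson order_trans le_less_trans)

lemma partition_sum_le_split_right:
  assumes "(n, t) \<in> partitions a c" "a < x" "\<forall>i\<le>n. t i = a \<or> x \<le> t i"
  shows "partition_sum \<gamma> (n, t) \<le> ennreal (dist (\<gamma> a) (\<gamma> x)) + curve_length \<gamma> x c"
  using assms
proof (induction n arbitrary: t)
  case 0
  then show ?case by (simp add: partition_sum_def)
next
  case (Suc m)
  note tail = partitions_tail[OF Suc.prems(1)]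
  show ?case
  proof (cases "t 1 = a")
    case True
    have "partition_sum \<gamma> (m, \<lambda>i. t (Suc i)) \<le> ennreal (dist (\<gamma> a) (\<gamma> x)) + curve_length \<gamma> x c"
      using tail(1) True Suc.prems by (intro Suc.IH) auto
    then show ?thesis unfolding tail(3) using True by simp
  next
    case False
    then have "x \<le> t 1" using Suc.prems(3) by (metis One_nat_def Suc_le_mono le0)
    have "partition_sum \<gamma> (Suc m, t)
        \<le> ennreal (dist (\<gamma> a) (\<gamma> x)) + (ennreal (dist (\<gamma> x) (\<gamma> (t 1))) + partition_sum \<gamma> (m, \<lambda>i. t (Suc i)))"
      unfolding tail(3) add.assoc[symmetric] by (intro add_right_mono ennreal_dist_triangle)
    also have "\<dots> = ennreal (dist (\<gamma> a) (\<gamma> x)) + partition_sum \<gamma> (partition_cons x (m, \<lambda>i. t (Suc i)))"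
      by (simp add: partition_sum_cons)
    also have "\<dots> \<le> ennreal (dist (\<gamma> a) (\<gamma> x)) + curve_length \<gamma> x c"
      using \<open>x \<le> t 1\<close> by (intro add_left_mono partition_sum_le_curve_length partition_cons_partitions[OF tail(1)])
    finally show ?thesis .
  qed
qed

lemma partitions_gap_right:
  assumes p: "(n, t) \<in> partitions a b" and "a < b" "0 < d"
  shows "\<exists>x. a < x \<and> x \<le> b \<and> x < a + d \<and> (\<forall>i\<le>n. t i = a \<or> x \<le> t i)"
proof -
  define M where "M = t ` {i. i \<le> n \<and> a < t i}"
  have "finite M" unfolding M_def by simp
  moreover have "b \<in> M" using p \<open>a < b\<close> unfolding M_def partitions_def by force
  ultimately have "Min M \<in> M" and Min_le: "\<forall>i\<le>n. a < t i \<longrightarrow> Min M \<le> t i"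
    by (auto intro: Min_in) (auto intro: Min_le simp: M_def)
  then have "a < Min M" "Min M \<le> b"
    using partitions_range[OF p] unfolding M_def by auto
  moreover have "\<forall>i\<le>n. t i = a \<or> min (Min M) (a + d / 2) \<le> t i"
    using Min_le partitions_range(1)[OF p] by force
  ultimately show ?thesis using \<open>0 < d\<close> by (intro exI[of _ "min (Min M) (a + d / 2)"]) auto
qed

text \<open>Take a partition whose sum is within \<open>\<eta>/2\<close> of the length and a point \<open>x\<close> beyond \<open>a\<close> but
  before the first partition point and so close to \<open>a\<close> that \<open>d(\<gamma> a, \<gamma> x) < \<eta>/2\<close>: the partition
  then shows that almost all of the length lies on \<open>[x, b]\<close>.\<close>
lemma curve_length_right_small:
  assumes finite: "curve_length \<gamma> a b < \<infinity>" and cont: "continuous_on {a..b} \<gamma>" and "\<eta> > 0"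
  shows "\<exists>d>0. \<forall>y\<in>{a..b}. y < a + d \<longrightarrow> curve_length \<gamma> a y < ennreal \<eta>"
proof (cases "a < b")
  case False
  then have "y = a" if "y \<in> {a..b}" for y using that by auto
  then show ?thesis using \<open>\<eta> > 0\<close> by (intro exI[of _ 1]) (force simp: curve_length_refl)
next
  case True
  have "\<exists>p\<in>partitions a b. curve_length \<gamma> a b < partition_sum \<gamma> p + ennreal (\<eta> / 2)"
  proof (rule SUP_approx_ennreal)
    show "partitions a b \<noteq> {}" using partitions_trivial[of a b] True by auto
  qed (use finite \<open>\<eta> > 0\<close> curve_length_SUP_partitions in auto)
  then obtain p where p: "p \<in> partitions a b"
    and close: "curve_length \<gamma> a b < partition_sum \<gamma> p + ennreal (\<eta> / 2)"
    by blast
  obtain n t where p_eq: "p = (n, t)" by (cases p)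
  obtain d0 where d0: "d0 > 0" "\<forall>y\<in>{a..b}. dist y a < d0 \<longrightarrow> dist (\<gamma> y) (\<gamma> a) < \<eta> / 2"
    using cont True \<open>\<eta> > 0\<close> unfolding continuous_on_iff
    by (metis atLeastAtMost_iff half_gt_zero less_imp_le order.refl)
  then obtain x where x: "a < x" "x \<le> b" "x < a + d0" "\<forall>i\<le>n. t i = a \<or> x \<le> t i"
    using partitions_gap_right[of n t a b d0] p p_eq True by blast
  then have "dist (\<gamma> a) (\<gamma> x) < \<eta> / 2"
    using d0(2)[rule_format, of x] by (simp add: dist_real_def dist_commute)
  have split: "partition_sum \<gamma> p \<le> ennreal (dist (\<gamma> a) (\<gamma> x)) + curve_length \<gamma> x b"
    using p x(1,4) unfolding p_eq by (rule partition_sum_le_split_right)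
  have "curve_length \<gamma> x b + curve_length \<gamma> a x = curve_length \<gamma> a b"
    using curve_length_additive[of a x b \<gamma>] x by (simp add: add.commute)
  also have "\<dots> < partition_sum \<gamma> p + ennreal (\<eta> / 2)" by (rule close)
  also have "\<dots> \<le> (ennreal (dist (\<gamma> a) (\<gamma> x)) + curve_length \<gamma> x b) + ennreal (\<eta> / 2)"
    using split by (rule add_right_mono)
  also have "\<dots> \<le> (ennreal (\<eta> / 2) + curve_length \<gamma> x b) + ennreal (\<eta> / 2)"
    using \<open>dist (\<gamma> a) (\<gamma> x) < \<eta> / 2\<close> by (intro add_right_mono ennreal_leI) simp
  also have "\<dots> = curve_length \<gamma> x b + ennreal \<eta>"
    using \<open>\<eta> > 0\<close> by (simp add: ac_simps flip: ennreal_plus)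
  finally have small: "curve_length \<gamma> a x < ennreal \<eta>"
    by (simp add: ennreal_add_left_cancel_less)
  show ?thesis
  proof (intro exI[of _ "x - a"] conjI ballI impI)
    fix y assume "y \<in> {a..b}" "y < a + (x - a)"
    then show "curve_length \<gamma> a y < ennreal \<eta>"
      using curve_length_mono(1)[of a y x \<gamma>] small by simp
  qed (use x in simp)
qed

lemma curve_length_left_small:
  assumes finite: "curve_length \<gamma> a b < \<infinity>" and cont: "continuous_on {a..b} \<gamma>" and "\<eta> > 0"
  shows "\<exists>d>0. \<forall>y\<in>{a..b}. b - d < y \<longrightarrow> curve_length \<gamma> y b < ennreal \<eta>"
proof -
  have "continuous_on {-b..-a} (\<lambda>s. \<gamma> (- s))"
    by (rule continuous_on_compose2[OF cont]) (auto intro!: continuous_intros)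
  then obtain d where "d > 0"
    and d: "\<forall>y\<in>{-b..-a}. y < - b + d \<longrightarrow> curve_length (\<lambda>s. \<gamma> (- s)) (- b) y < ennreal \<eta>"
    using curve_length_right_small[of "\<lambda>s. \<gamma> (- s)" "- b" "- a"] finite \<open>\<eta> > 0\<close>
    by (auto simp: curve_length_reflect)
  have "curve_length \<gamma> y b < ennreal \<eta>" if "y \<in> {a..b}" "b - d < y" for y
    using d[rule_format, of "- y"] that by (simp add: curve_length_reflect)
  then show ?thesis using \<open>d > 0\<close> by blast
qed

section \<open>Arc length and line integrals along subpaths\<close>

lemma arclen_fun_add:
  assumes "curve_length \<gamma> 0 1 < \<infinity>" "0 \<le> s" "s \<le> t" "t \<le> 1"
  shows "arclen_fun \<gamma> t = arclen_fun \<gamma> s + enn2real (curve_length \<gamma> s t)"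
  using curve_length_additive[of 0 s t \<gamma>] assms
    curve_length_finite_subinterval[of \<gamma> 0 1 0 s] curve_length_finite_subinterval[of \<gamma> 0 1 s t]
  by (simp add: arclen_fun_def enn2real_plus)

lemma arclen_fun_continuous:
  assumes finite: "curve_length \<gamma> 0 1 < \<infinity>" and cont: "continuous_on {0..1} \<gamma>"
  shows "continuous_on {0..1} (arclen_fun \<gamma>)"
  unfolding continuous_on_iff
proof (intro ballI allI impI)
  fix t0 e :: real assume t0: "t0 \<in> {0..1}" and "0 < e"
  obtain dR where "dR > 0" and dR: "\<forall>y\<in>{t0..1}. y < t0 + dR \<longrightarrow> curve_length \<gamma> t0 y < ennreal e"
    using curve_length_right_small[of \<gamma> t0 1] curve_length_finite_subinterval[OF finite, of t0 1]
      continuous_on_subset[OF cont, of "{t0..1}"] t0 \<open>0 < e\<close> by auto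
  obtain dL where "dL > 0" and dL: "\<forall>y\<in>{0..t0}. t0 - dL < y \<longrightarrow> curve_length \<gamma> y t0 < ennreal e"
    using curve_length_left_small[of \<gamma> 0 t0] curve_length_finite_subinterval[OF finite, of 0 t0]
      continuous_on_subset[OF cont, of "{0..t0}"] t0 \<open>0 < e\<close> by auto
  show "\<exists>d>0. \<forall>y\<in>{0..1}. dist y t0 < d \<longrightarrow> dist (arclen_fun \<gamma> y) (arclen_fun \<gamma> t0) < e"
  proof (intro exI[of _ "min dR dL"] conjI ballI impI)
    fix y assume y: "y \<in> {0..1}" "dist y t0 < min dR dL"
    show "dist (arclen_fun \<gamma> y) (arclen_fun \<gamma> t0) < e"
    proof (cases "t0 \<le> y")
      case True
      then show ?thesis
        using arclen_fun_add[OF finite, of t0 y] dR y t0 \<open>0 < e\<close>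
          curve_length_finite_subinterval[OF finite, of t0 y]
        by (auto simp: dist_real_def)
    next
      case False
      then show ?thesis
        using arclen_fun_add[OF finite, of y t0] dL y t0 \<open>0 < e\<close>
          curve_length_finite_subinterval[OF finite, of y t0]
        by (auto simp: dist_real_def)
    qed
  qed (use \<open>dR > 0\<close> \<open>dL > 0\<close> in simp)
qed

lemma loc_rectifiable_iff: "loc_rectifiable \<gamma> \<longleftrightarrow> curve_length \<gamma> 0 1 < \<infinity>"
  unfolding loc_rectifiable_def using curve_length_finite_subinterval[of \<gamma> 0 1] by auto

lemma arclen_fun_eq_imp_eq:
  assumes finite: "curve_length \<gamma> 0 1 < \<infinity>" and "s \<in> {0..1}" "t \<in> {0..1}" "s \<le> t"
    and "arclen_fun \<gamma> s = arclen_fun \<gamma> t"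
  shows "\<gamma> s = \<gamma> t"
proof -
  have "enn2real (curve_length \<gamma> s t) = 0"
    using arclen_fun_add[OF finite, of s t] assms by simp
  moreover have "curve_length \<gamma> s t < \<infinity>"
    using curve_length_finite_subinterval[OF finite, of s t] assms by simp
  ultimately have "curve_length \<gamma> s t = 0"
    by (metis enn2real_eq_0_iff infinity_ennreal_def less_irrefl)
  then show ?thesis using dist_le_curve_length[OF \<open>s \<le> t\<close>, of \<gamma>] by simp
qed

text \<open>\<open>arc_param\<close> chooses a parameter by \<open>SOME\<close>; the choice is harmless, since parameters of
  equal arc length give the same point.\<close>
lemma arc_param_eq:
  assumes finite: "curve_length \<gamma> 0 1 < \<infinity>" and "t \<in> {0..1}"
  shows "arc_param \<gamma> (arclen_fun \<gamma> t) = \<gamma> t"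
proof -
  define t' where "t' = (SOME t'. t' \<in> {0..1} \<and> arclen_fun \<gamma> t' = arclen_fun \<gamma> t)"
  have t': "t' \<in> {0..1}" "arclen_fun \<gamma> t' = arclen_fun \<gamma> t"
    unfolding t'_def using someI[of "\<lambda>t'. t' \<in> {0..1} \<and> arclen_fun \<gamma> t' = arclen_fun \<gamma> t" t] assms(2)
    by blast+
  have "\<gamma> t' = \<gamma> t"
  proof (cases "t' \<le> t")
    case True
    then show ?thesis using arclen_fun_eq_imp_eq[OF finite t'(1) assms(2)] t'(2) by simp
  next
    case False
    then show ?thesis using arclen_fun_eq_imp_eq[OF finite assms(2) t'(1)] t'(2) by simp
  qed
  then show ?thesis by (simp add: arc_param_def t'_def)
qed

lemma emeasure_lborel_vimage_translate:
  fixes c :: real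
  assumes "A \<in> sets borel"
  shows "emeasure lborel ((\<lambda>y. y - c) -` A) = emeasure lborel A"
proof -
  have "emeasure lborel A = emeasure (distr lborel borel ((+) (- c))) A"
    by (simp add: lborel_distr_plus)
  also have "\<dots> = emeasure lborel ((+) (- c) -` A \<inter> space lborel)"
    by (rule emeasure_distr) (simp_all add: assms)
  also have "(+) (- c) -` A \<inter> space lborel = (\<lambda>y. y - c) -` A" by auto
  finally show ?thesis by simp
qed

text \<open>The next two lemmas assume no measurability: they are applied to integrands built from
  the arc-length parametrisation or from \<open>d(x, x\<^sub>0)\<close>, which need not be Borel.\<close>
lemma nn_integral_lborel_translate_le:
  fixes c :: real
  shows "(\<integral>\<^sup>+x. F (x + c) \<partial>lborel) \<le> (\<integral>\<^sup>+x. F x \<partial>lborel)"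
  unfolding nn_integral_def[of lborel "\<lambda>x. F (x + c)"]
proof (rule SUP_least)
  fix g assume g: "g \<in> {g. simple_function lborel g \<and> g \<le> (\<lambda>x. F (x + c))}"
  define g' where "g' y = g (y - c)" for y
  have simple: "simple_function lborel g" and "g \<le> (\<lambda>x. F (x + c))" using g by auto
  have "(\<lambda>y. g (y - c)) \<in> borel_measurable borel"
    by (rule measurable_compose[of "\<lambda>y. y - c" borel borel])
      (use borel_measurable_simple_function[OF simple] in simp_all)
  then have "g' \<in> borel_measurable lborel" by (simp add: g'_def[abs_def])
  moreover have "g' ` space lborel = g ` space lborel"
  proof (auto simp: g'_def image_iff)
    show "\<exists>y. g x = g (y - c)" for x by (rule exI[of _ "x + c"]) simp
  qed
  ultimately have "simple_function lborel g'"
    using simple_functionD(1)[OF simple] by (intro simple_function_borel_measurable) simp_all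
  moreover have "g' \<le> F"
  proof (rule le_funI)
    fix y
    have "g (y - c) \<le> F (y - c + c)" using \<open>g \<le> (\<lambda>x. F (x + c))\<close> unfolding le_fun_def by blast
    then show "g' y \<le> F y" by (simp add: g'_def)
  qed
  moreover have "emeasure lborel (g' -` {v} \<inter> space lborel) = emeasure lborel (g -` {v} \<inter> space lborel)"
    for v
  proof -
    have "g -` {v} \<inter> space lborel \<in> sets borel"
      using simple_functionD(2)[OF simple] by simp
    moreover have "g' -` {v} \<inter> space lborel = (\<lambda>y. y - c) -` (g -` {v} \<inter> space lborel)"
      by (auto simp: g'_def)
    ultimately show ?thesis by (simp add: emeasure_lborel_vimage_translate)
  qed
  then have "integral\<^sup>S lborel g = integral\<^sup>S lborel g'"
    unfolding simple_integral_def \<open>g' ` space lborel = g ` space lborel\<close> by simp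
  ultimately show "integral\<^sup>S lborel g \<le> integral\<^sup>N lborel F"
    unfolding nn_integral_def by (intro SUP_upper2[of g']) simp_all
qed

lemma nn_integral_multc_le:
  fixes k :: ennreal
  assumes "k < \<infinity>"
  shows "(\<integral>\<^sup>+x. f x * k \<partial>M) \<le> integral\<^sup>N M f * k"
proof (cases "k = 0")
  case False
  have k: "k * inverse k = 1"
    using ennreal_divide_self[OF False] assms by (simp add: divide_ennreal_def)
  show ?thesis
    unfolding nn_integral_def[of M "\<lambda>x. f x * k"]
  proof (rule SUP_least)
    fix g assume g: "g \<in> {g. simple_function M g \<and> g \<le> (\<lambda>x. f x * k)}"
    let ?g = "\<lambda>x. g x * inverse k"
    have simple: "simple_function M ?g" using g by auto
    have "?g \<le> f"
    proof (rule le_funI)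
      fix x
      have "g x * inverse k \<le> f x * k * inverse k"
        using g by (auto simp: le_fun_def intro!: mult_right_mono)
      then show "?g x \<le> f x" by (simp add: mult.assoc k)
    qed
    have "k * (g x * inverse k) = g x" for x by (metis k mult.commute mult.left_commute mult_1)
    then have "integral\<^sup>S M g = integral\<^sup>S M (\<lambda>x. k * ?g x)" by simp
    also have "\<dots> = k * integral\<^sup>S M ?g" using simple by simp
    also have "\<dots> \<le> k * integral\<^sup>N M f"
      using simple \<open>?g \<le> f\<close> by (intro mult_left_mono) (auto simp: nn_integral_def intro!: SUP_upper)
    finally show "integral\<^sup>S M g \<le> integral\<^sup>N M f * k" by (simp add: mult.commute)
  qed
qed simp

lemma curve_length_subpath:
  assumes k: "k > 0" and \<sigma>: "\<And>s. s \<in> {0..1} \<Longrightarrow> \<sigma> s = \<gamma> (a + s * k)"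
    and "0 \<le> u" "u \<le> v" "v \<le> 1"
  shows "curve_length \<sigma> u v = curve_length \<gamma> (a + u * k) (a + v * k)"
proof -
  have "curve_length \<sigma> u v = curve_length (\<lambda>s. \<gamma> (a + s * k)) u v"
    using \<sigma> assms(3-5) by (intro curve_length_cong) auto
  also have "\<dots> = curve_length \<gamma> (a + u * k) (a + v * k)" by (rule curve_length_affine[OF k])
  finally show ?thesis .
qed

lemma affine_in_interval:
  fixes s a b :: real
  assumes "s \<in> {0..1}" "a \<le> b"
  shows "a + s * (b - a) \<in> {a..b}"
  using assms mult_right_mono[of s 1 "b - a"] mult_left_mono[of 0 "b - a" s] by (auto simp: algebra_simps)

lemma arclen_fun_subpath:
  assumes finite: "curve_length \<gamma> 0 1 < \<infinity>" and ab: "0 \<le> a" "a < b" "b \<le> 1"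
    and \<sigma>: "\<And>s. s \<in> {0..1} \<Longrightarrow> \<sigma> s = \<gamma> (a + s * (b - a))"
  shows "curve_length \<sigma> 0 1 < \<infinity>"
    and "\<And>u. u \<in> {0..1} \<Longrightarrow> arclen_fun \<sigma> u = arclen_fun \<gamma> (a + u * (b - a)) - arclen_fun \<gamma> a"
proof -
  have k: "b - a > 0" using ab by simp
  show "curve_length \<sigma> 0 1 < \<infinity>"
    using curve_length_subpath[of "b - a" \<sigma> \<gamma> a, OF k \<sigma>, of 0 1] curve_length_finite_subinterval[OF finite, of a b] ab
    by simp
  fix u :: real assume u: "u \<in> {0..1}"
  then have "a + u * (b - a) \<in> {a..b}" using ab by (intro affine_in_interval) auto
  then show "arclen_fun \<sigma> u = arclen_fun \<gamma> (a + u * (b - a)) - arclen_fun \<gamma> a"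
    using curve_length_subpath[of "b - a" \<sigma> \<gamma> a, OF k \<sigma>, of 0 u] arclen_fun_add[OF finite, of a "a + u * (b - a)"] u ab
    by (simp add: arclen_fun_def)
qed

lemma arc_param_subpath:
  assumes finite: "curve_length \<gamma> 0 1 < \<infinity>" and cont: "continuous_on {0..1} \<gamma>"
    and ab: "0 \<le> a" "a < b" "b \<le> 1" and \<sigma>: "\<And>s. s \<in> {0..1} \<Longrightarrow> \<sigma> s = \<gamma> (a + s * (b - a))"
    and y: "y \<in> {0..arclen_fun \<sigma> 1}"
  shows "arc_param \<sigma> y = arc_param \<gamma> (y + arclen_fun \<gamma> a)"
proof -
  note arclen_\<sigma> = arclen_fun_subpath[OF finite ab \<sigma>]
  have "arclen_fun \<gamma> a \<le> y + arclen_fun \<gamma> a" "y + arclen_fun \<gamma> a \<le> arclen_fun \<gamma> b"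
    using y arclen_\<sigma>(2)[of 1] by auto
  moreover have "continuous_on {a..b} (arclen_fun \<gamma>)"
    by (rule continuous_on_subset[OF arclen_fun_continuous[OF finite cont]]) (use ab in auto)
  ultimately obtain t where t: "a \<le> t" "t \<le> b" "arclen_fun \<gamma> t = y + arclen_fun \<gamma> a"
    using IVT'[of "arclen_fun \<gamma>" a "y + arclen_fun \<gamma> a" b] ab by auto
  define u where "u = (t - a) / (b - a)"
  have u: "u \<in> {0..1}" "a + u * (b - a) = t" using t ab by (auto simp: u_def)
  then have "arclen_fun \<sigma> u = y" using arclen_\<sigma>(2)[of u] t by simp
  then have "arc_param \<sigma> y = \<sigma> u" using arc_param_eq[OF arclen_\<sigma>(1) u(1)] by simp
  also have "\<dots> = \<gamma> t" using \<sigma>[OF u(1)] u(2) by simp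
  also have "\<dots> = arc_param \<gamma> (y + arclen_fun \<gamma> a)"
    using arc_param_eq[OF finite, of t] t ab by simp
  finally show ?thesis .
qed

lemma loc_rectifiable_subpath:
  assumes "loc_rectifiable \<gamma>" "0 \<le> a" "a < b" "b \<le> 1"
    and "\<And>s. s \<in> {0..1} \<Longrightarrow> \<sigma> s = \<gamma> (a + s * (b - a))"
  shows "loc_rectifiable \<sigma>"
  using arclen_fun_subpath(1)[of \<gamma> a b \<sigma>] assms by (simp add: loc_rectifiable_iff)

text \<open>The arc-length parametrisation of the subpath is that of \<open>\<gamma>\<close> on a subinterval of
  \<open>[0, \<ell>(\<gamma>)]\<close>, shifted to start at \<open>0\<close>.\<close>
lemma line_integral_subpath_le:
  assumes cont: "continuous_on {0..1} \<gamma>" and rect: "loc_rectifiable \<gamma>"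
    and ab: "0 \<le> a" "a < b" "b \<le> 1" and \<sigma>: "\<And>s. s \<in> {0..1} \<Longrightarrow> \<sigma> s = \<gamma> (a + s * (b - a))"
  shows "line_integral \<rho> \<sigma> \<le> line_integral \<rho> \<gamma>"
proof -
  have finite: "curve_length \<gamma> 0 1 < \<infinity>" using rect by (simp add: loc_rectifiable_iff)
  define c where "c = arclen_fun \<gamma> a"
  define L where "L = arclen_fun \<sigma> 1"
  have "L = arclen_fun \<gamma> b - c" using arclen_fun_subpath(2)[OF finite ab \<sigma>, of 1] by (simp add: L_def c_def)
  moreover have "0 \<le> c" by (simp add: c_def arclen_fun_def)
  moreover have "arclen_fun \<gamma> b \<le> arclen_fun \<gamma> 1"
    using arclen_fun_add[OF finite, of b 1] ab by simp
  ultimately have window: "{c..c + L} \<subseteq> {0..arclen_fun \<gamma> 1}" by auto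
  have "line_integral \<rho> \<sigma> = (\<integral>\<^sup>+ y. \<rho> (arc_param \<sigma> y) * indicator {0..L} y \<partial>lborel)"
    by (simp add: line_integral_def L_def)
  also have "\<dots> = (\<integral>\<^sup>+ y. (\<lambda>z. \<rho> (arc_param \<gamma> z) * indicator {c..c + L} z) (y + c) \<partial>lborel)"
    using arc_param_subpath[OF finite cont ab \<sigma>]
    by (intro nn_integral_cong) (auto simp: indicator_def L_def c_def)
  also have "\<dots> \<le> (\<integral>\<^sup>+ z. \<rho> (arc_param \<gamma> z) * indicator {c..c + L} z \<partial>lborel)"
    by (rule nn_integral_lborel_translate_le)
  also have "\<dots> \<le> (\<integral>\<^sup>+ z. \<rho> (arc_param \<gamma> z) * indicator {0..arclen_fun \<gamma> 1} z \<partial>lborel)"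
    using window by (intro nn_integral_mono mult_left_mono) (auto simp: indicator_def)
  also have "\<dots> = line_integral \<rho> \<gamma>" by (simp add: line_integral_def)
  finally show ?thesis .
qed

section \<open>Liftings under open discrete maps\<close>

lemma left_sequence_from_frequently:
  fixes a c :: real
  assumes "a < c" and frequent: "\<And>y. a \<le> y \<Longrightarrow> y < c \<Longrightarrow> \<exists>w. y < w \<and> w < c \<and> P w"
  shows "\<exists>w. (\<forall>n. w n \<in> {a..<c} \<and> P (w n)) \<and> w \<longlonglongrightarrow> c"
proof -
  have "\<forall>n. \<exists>w. max a (c - 1 / (real n + 1)) < w \<and> w < c \<and> P w"
  proof
    fix n
    have "max a (c - 1 / (real n + 1)) < c" using \<open>a < c\<close> by simp
    then show "\<exists>w. max a (c - 1 / (real n + 1)) < w \<and> w < c \<and> P w"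
      using frequent[of "max a (c - 1 / (real n + 1))"] by simp
  qed
  then obtain w where w: "\<And>n. max a (c - 1 / (real n + 1)) < w n" "\<And>n. w n < c" "\<And>n. P (w n)"
    by metis
  have "(\<lambda>n. c - 1 / (real n + 1)) \<longlonglongrightarrow> c"
    using tendsto_diff[OF tendsto_const[of c] LIMSEQ_inverse_real_of_nat]
    by (simp add: divide_inverse add.commute)
  moreover have "c - 1 / (real n + 1) \<le> w n" "w n \<le> c" for n
    using w(1,2)[of n] by auto
  ultimately have "w \<longlonglongrightarrow> c"
    by (intro tendsto_sandwich[of "\<lambda>n. c - 1 / (real n + 1)" w sequentially "\<lambda>n. c"]) auto
  moreover have "w n \<in> {a..<c}" for n using w(1,2)[of n] by auto
  ultimately show ?thesis using w(3) by blast
qed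

lemma lifting_cluster_point:
  fixes f :: "'a::metric_space \<Rightarrow> 'b::metric_space" and \<alpha> :: "real \<Rightarrow> 'a"
  assumes K: "compact K" "K \<subseteq> D" and "open D" and f: "continuous_on D f"
    and g: "continuous_on {a..c} g" and lift: "\<forall>t\<in>{a..<c}. f (\<alpha> t) = g t" and "\<alpha> ` {a..<c} \<subseteq> K"
    and w: "\<forall>n. w n \<in> {a..<c}" "w \<longlonglongrightarrow> c"
  shows "\<exists>q\<in>K. \<exists>r. strict_mono r \<and> (\<lambda>n. \<alpha> (w (r n))) \<longlonglongrightarrow> q \<and> f q = g c"
proof -
  have "\<forall>n. \<alpha> (w n) \<in> K" using w \<open>\<alpha> ` {a..<c} \<subseteq> K\<close> by auto
  then obtain q r where q: "q \<in> K" "strict_mono r" "((\<lambda>n. \<alpha> (w n)) \<circ> r) \<longlonglongrightarrow> q"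
    by (rule seq_compactE[OF compact_imp_seq_compact[OF K(1)]])
  then have q3: "(\<lambda>n. \<alpha> (w (r n))) \<longlonglongrightarrow> q" by (simp add: o_def)
  have "isCont f q" using f \<open>open D\<close> q(1) K(2) by (auto simp: continuous_on_eq_continuous_at)
  then have "(\<lambda>n. f (\<alpha> (w (r n)))) \<longlonglongrightarrow> f q"
    using q3 isCont_tendsto_compose by blast
  moreover have "(\<lambda>n. g (w (r n))) \<longlonglongrightarrow> g c"
  proof (rule continuous_on_tendsto_compose[OF g])
    show "(\<lambda>n. w (r n)) \<longlonglongrightarrow> c" using LIMSEQ_subseq_LIMSEQ[OF w(2) q(2)] by (simp add: o_def)
    show "\<forall>\<^sub>F n in sequentially. w (r n) \<in> {a..c}" using w(1) by (simp add: less_imp_le)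
  qed (use w(1) in \<open>auto intro: less_imp_le\<close>)
  moreover have "(\<lambda>n. f (\<alpha> (w (r n)))) = (\<lambda>n. g (w (r n)))" using lift w(1) by auto
  ultimately have "f q = g c" using LIMSEQ_unique by metis
  then show ?thesis using q(1,2) q3 by blast
qed

lemma frequently_at_left_dist_eq:
  fixes \<alpha> :: "real \<Rightarrow> 'a::metric_space"
  assumes cont: "continuous_on {a..<c} \<alpha>"
    and far: "\<And>y. y < c \<Longrightarrow> \<exists>z. y < z \<and> z < c \<and> h < dist (\<alpha> z) p"
    and near: "\<And>y. y < c \<Longrightarrow> \<exists>z. y < z \<and> z < c \<and> dist (\<alpha> z) p < h"
    and y: "a \<le> y" "y < c"
  shows "\<exists>w. y < w \<and> w < c \<and> dist (\<alpha> w) p = h"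
proof -
  obtain z1 where z1: "y < z1" "z1 < c" "h < dist (\<alpha> z1) p" using far y(2) by blast
  obtain z2 where z2: "z1 < z2" "z2 < c" "dist (\<alpha> z2) p < h" using near z1(2) by blast
  have "continuous_on {z1..z2} (\<lambda>t. dist (\<alpha> t) p)"
    by (intro continuous_intros continuous_on_subset[OF cont]) (use y z1 z2 in auto)
  then obtain w where "z1 \<le> w" "w \<le> z2" "dist (\<alpha> w) p = h"
    using IVT2'[of "\<lambda>t. dist (\<alpha> t) p" z2 h z1] z1 z2 by force
  then show ?thesis using z1 z2 by (intro exI[of _ w]) auto
qed

lemma sphere_crossings_if_not_tendsto_at_left:
  fixes \<alpha> :: "real \<Rightarrow> 'a::metric_space"
  assumes "a < c" and cont: "continuous_on {a..<c} \<alpha>"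
    and u: "\<forall>n. u n \<in> {a..<c}" "u \<longlonglongrightarrow> c" "(\<lambda>n. \<alpha> (u n)) \<longlonglongrightarrow> p"
    and not_tendsto: "\<not> (\<alpha> \<longlongrightarrow> p) (at_left c)" and "0 < r"
  shows "\<exists>h w. 0 < h \<and> h < r \<and> (\<forall>n. w n \<in> {a..<c} \<and> dist (\<alpha> (w n)) p = h) \<and> w \<longlonglongrightarrow> c"
proof -
  obtain e where "e > 0" and not_close: "\<not> eventually (\<lambda>x. dist (\<alpha> x) p < e) (at_left c)"
    using not_tendsto unfolding tendsto_iff by blast
  define h where "h = min e r / 2"
  have h: "0 < h" "h < e" "h < r" using \<open>e > 0\<close> \<open>0 < r\<close> by (auto simp: h_def)
  have far: "\<exists>z. y < z \<and> z < c \<and> h < dist (\<alpha> z) p" if y: "y < c" for y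
  proof -
    obtain z where "y < z" "z < c" "\<not> dist (\<alpha> z) p < e"
      using not_close y unfolding eventually_at_left_field by blast
    then show ?thesis using h(2) by (intro exI[of _ z]) auto
  qed
  have near: "\<exists>z. y < z \<and> z < c \<and> dist (\<alpha> z) p < h" if "y < c" for y
  proof -
    have "eventually (\<lambda>n. y < u n) sequentially"
      using order_tendstoD(1)[OF u(2) that] .
    moreover have "eventually (\<lambda>n. dist (\<alpha> (u n)) p < h) sequentially"
      by (rule tendstoD[OF u(3) h(1)])
    ultimately have "eventually (\<lambda>n. y < u n \<and> dist (\<alpha> (u n)) p < h) sequentially"
      by (rule eventually_conj)
    then obtain n where "y < u n" "dist (\<alpha> (u n)) p < h"
      by (auto simp: eventually_sequentially)
    then show ?thesis using u(1)[rule_format, of n] by (intro exI[of _ "u n"]) auto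
  qed
  show ?thesis
    using left_sequence_from_frequently[OF \<open>a < c\<close> frequently_at_left_dist_eq[OF cont far near]] h
    by blast
qed

text \<open>The lifting accumulates at \<open>c\<close> only in the fibre over \<open>g c\<close>. If it did not converge,
  it would cross a small sphere around an accumulation point \<open>p\<close> arbitrarily close to \<open>c\<close>,
  producing a second accumulation point in the fibre at positive distance from \<open>p\<close>,
  which discreteness rules out.\<close>
lemma lifting_tendsto_at_left:
  fixes f :: "'a::metric_space \<Rightarrow> 'b::metric_space" and \<alpha> :: "real \<Rightarrow> 'a"
  assumes "a < c" and cont: "continuous_on {a..<c} \<alpha>" and img: "\<alpha> ` {a..<c} \<subseteq> K"
    and K: "compact K" "K \<subseteq> D" and D: "open D"
    and f: "continuous_on D f" "discrete_map D f" and g: "continuous_on {a..c} g"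
    and lift: "\<forall>t\<in>{a..<c}. f (\<alpha> t) = g t"
  shows "\<exists>p\<in>K. (\<alpha> \<longlongrightarrow> p) (at_left c) \<and> f p = g c"
proof -
  note cluster = lifting_cluster_point[OF K D f(1) g lift img]
  have "\<exists>w. y < w \<and> w < c \<and> True" if "y < c" for y
    using that by (intro exI[of _ "(y + c) / 2"]) auto
  then obtain u where u: "\<forall>n. u n \<in> {a..<c}" "u \<longlonglongrightarrow> c"
    using left_sequence_from_frequently[of a c "\<lambda>_. True"] \<open>a < c\<close> by blast
  then obtain p r where p: "p \<in> K" "f p = g c" "strict_mono r" "(\<lambda>n. \<alpha> (u (r n))) \<longlonglongrightarrow> p"
    using cluster by blast
  have ur: "\<forall>n. u (r n) \<in> {a..<c}" "(\<lambda>n. u (r n)) \<longlonglongrightarrow> c"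
    using u LIMSEQ_subseq_LIMSEQ[OF u(2) p(3)] by (auto simp: o_def)
  obtain r0 where "r0 > 0" and isolated: "ball p r0 \<inter> (D \<inter> f -` {g c}) = {p}"
    using f(2) p(1,2) K(2) unfolding discrete_map_def by blast
  have "(\<alpha> \<longlongrightarrow> p) (at_left c)"
  proof (rule ccontr)
    assume "\<not> (\<alpha> \<longlongrightarrow> p) (at_left c)"
    then obtain h w where h: "0 < h" "h < r0"
      and w: "\<forall>n. w n \<in> {a..<c} \<and> dist (\<alpha> (w n)) p = h" "w \<longlonglongrightarrow> c"
      using sphere_crossings_if_not_tendsto_at_left[OF \<open>a < c\<close> cont ur p(4) _ \<open>r0 > 0\<close>] by blast
    then obtain q r' where q: "q \<in> K" "f q = g c" "(\<lambda>n. \<alpha> (w (r' n))) \<longlonglongrightarrow> q"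
      using cluster[of w] by blast
    have "(\<lambda>n. dist (\<alpha> (w (r' n))) p) \<longlonglongrightarrow> dist q p"
      by (intro tendsto_dist q(3) tendsto_const)
    then have "(\<lambda>n. h) \<longlonglongrightarrow> dist q p" using w(1) by simp
    then have "dist q p = h" by (simp add: LIMSEQ_const_iff)
    then have "q \<in> ball p r0 \<inter> (D \<inter> f -` {g c})" using h q K(2) by (auto simp: dist_commute)
    then show False using isolated \<open>dist q p = h\<close> h(1) by auto
  qed
  then show ?thesis using p by blast
qed

lemma continuous_on_extend_at_left:
  fixes \<alpha> :: "real \<Rightarrow> 'a::topological_space"
  assumes "a < c" and cont: "continuous_on {a..<c} \<alpha>" and lim: "(\<alpha> \<longlongrightarrow> p) (at_left c)"
  shows "continuous_on {a..c} (\<lambda>t. if t < c then \<alpha> t else p)"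
proof (rule continuous_on_IccI)
  let ?h = "\<lambda>t. if t < c then \<alpha> t else p"
  have "(\<alpha> \<longlongrightarrow> \<alpha> a) (at a within {a..<c})"
    using cont \<open>a < c\<close> unfolding continuous_on_def by auto
  moreover have "at a within {a..<c} = at_right a"
    by (rule at_within_nhd[of a "{..<c}"]) (use \<open>a < c\<close> in auto)
  moreover have "eventually (\<lambda>t. \<alpha> t = ?h t) (at_right a)"
    unfolding eventually_at_right_field using \<open>a < c\<close> by auto
  ultimately show "(?h \<longlongrightarrow> ?h a) (at_right a)"
    using \<open>a < c\<close> by (simp add: tendsto_cong)
  have "eventually (\<lambda>t. \<alpha> t = ?h t) (at_left c)"
    unfolding eventually_at_left_field using \<open>a < c\<close> by auto
  then show "(?h \<longlongrightarrow> ?h c) (at_left c)"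
    using tendsto_cong lim by fastforce
  show "?h \<midarrow>x\<rightarrow> ?h x" if "a < x" "x < c" for x
  proof -
    have "continuous_on {a<..<c} \<alpha>" using cont by (rule continuous_on_subset) auto
    then have "isCont \<alpha> x" using that by (simp add: continuous_on_eq_continuous_at)
    moreover have "eventually (\<lambda>t. \<alpha> t = ?h t) (nhds x)"
      using eventually_nhds_in_open[of "{..<c}" x] that by (auto elim!: eventually_mono)
    ultimately have "isCont ?h x" using isCont_cong[of \<alpha> ?h x] by simp
    then show ?thesis using that by (simp add: isCont_def)
  qed
qed (rule \<open>a < c\<close>)

lemma continuous_on_glue_at_left:
  fixes \<alpha> \<beta> :: "real \<Rightarrow> 'a::topological_space"
  assumes "a < c" "c < e" and "continuous_on {a..<c} \<alpha>" "(\<alpha> \<longlongrightarrow> p) (at_left c)"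
    and "continuous_on {c..<e} \<beta>" "\<beta> c = p"
  shows "continuous_on {a..<e} (\<lambda>t. if t < c then \<alpha> t else \<beta> t)"
proof -
  have "continuous_on ({a..c} \<union> {c..<e}) (\<lambda>t. if t < c then (if t < c then \<alpha> t else p) else \<beta> t)"
  proof (rule continuous_on_cases_local)
    show "closedin (top_of_set ({a..c} \<union> {c..<e})) {a..c}"
      by (rule closed_subset) auto
    have "{c..<e} = ({a..c} \<union> {c..<e}) \<inter> {c..}" using assms(1,2) by auto
    then show "closedin (top_of_set ({a..c} \<union> {c..<e})) {c..<e}"
      by (metis closedin_closed_Int closed_atLeast)
  qed (use continuous_on_extend_at_left[OF assms(1,3,4)] assms(5,6) in auto)
  moreover have "{a..c} \<union> {c..<e} = {a..<e}" using assms(1,2) by auto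
  ultimately show ?thesis by (simp cong: if_cong)
qed

text \<open>A maximal lifting that stays in a compact part of \<open>D\<close> cannot stop early: its limit at the
  stopping time lies in the fibre, and condition \<open>A\<close> would continue it from there.\<close>
lemma max_lifting_in_compact:
  fixes f :: "'a::metric_space \<Rightarrow> 'b::metric_space"
  assumes D: "open D" and f: "continuous_on D f" "discrete_map D f" and A: "condition_A D f"
    and K: "compact K" "K \<subseteq> D" and \<gamma>: "continuous_on {a..b} \<gamma>"
    and max: "max_lifting D f \<gamma> a b x c \<alpha>" and img: "\<alpha> ` {a..<c} \<subseteq> K"
  shows "c = b" "\<exists>p\<in>K. (\<alpha> \<longlongrightarrow> p) (at_left c) \<and> f p = \<gamma> c"
proof -
  from max have c: "a < c" "c \<le> b" and cont: "continuous_on {a..<c} \<alpha>"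
    and \<alpha>D: "\<alpha> ` {a..<c} \<subseteq> D" and lift: "\<forall>t\<in>{a..<c}. f (\<alpha> t) = \<gamma> t"
    and maximal: "\<not> (\<exists>c' \<alpha>'. c < c' \<and> c' \<le> b \<and> is_lifting D f \<gamma> a c' \<alpha>' \<and> (\<forall>t\<in>{a..<c}. \<alpha>' t = \<alpha> t))"
    unfolding max_lifting_def is_lifting_def by auto
  have "continuous_on {a..c} \<gamma>" using \<gamma> c by (auto intro: continuous_on_subset)
  then show limit: "\<exists>p\<in>K. (\<alpha> \<longlongrightarrow> p) (at_left c) \<and> f p = \<gamma> c"
    using lifting_tendsto_at_left[OF c(1) cont img K D f] lift by blast
  then obtain p where p: "p \<in> K" "(\<alpha> \<longlongrightarrow> p) (at_left c)" "f p = \<gamma> c" by blast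
  show "c = b"
  proof (rule ccontr)
    assume "c \<noteq> b"
    with c have "c < b" by simp
    moreover have "continuous_on {c..<b} \<gamma>" using \<gamma> c by (auto intro: continuous_on_subset)
    ultimately obtain c2 \<alpha>2 where "max_lifting D f \<gamma> c b p c2 \<alpha>2"
      using A p K unfolding condition_A_def by blast
    then have c2: "c < c2" "c2 \<le> b" and "\<alpha>2 c = p" "continuous_on {c..<c2} \<alpha>2"
      and \<alpha>2: "\<alpha>2 ` {c..<c2} \<subseteq> D" "\<forall>t\<in>{c..<c2}. f (\<alpha>2 t) = \<gamma> t"
      unfolding max_lifting_def is_lifting_def by auto
    define \<alpha>' where "\<alpha>' t = (if t < c then \<alpha> t else \<alpha>2 t)" for t
    have "continuous_on {a..<c2} \<alpha>'"
      unfolding \<alpha>'_def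
      by (rule continuous_on_glue_at_left) (fact c(1) c2(1) cont p(2) \<open>continuous_on {c..<c2} \<alpha>2\<close> \<open>\<alpha>2 c = p\<close>)+
    then have "is_lifting D f \<gamma> a c2 \<alpha>'"
      using \<alpha>D \<alpha>2 lift by (auto simp: is_lifting_def \<alpha>'_def)
    moreover have "\<forall>t\<in>{a..<c}. \<alpha>' t = \<alpha> t" by (simp add: \<alpha>'_def)
    ultimately show False using maximal c2 by blast
  qed
qed

text \<open>Either the maximal lifting leaves \<open>B(x\<^sub>0, \<epsilon>\<^sub>0)\<close> before its end, or it stays in the compact
  closed ball, hence is defined on all of \<open>[0, 1]\<close>; its endpoint then lies over
  \<open>\<partial>f(B(x\<^sub>0, \<epsilon>\<^sub>0))\<close>, which the open set \<open>f(B(x\<^sub>0, \<epsilon>\<^sub>0))\<close> does not meet.\<close>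
lemma lifting_reaches_sphere:
  fixes f :: "'a::metric_space \<Rightarrow> 'b::metric_space" and \<gamma> :: "real \<Rightarrow> 'b"
  assumes D: "open D" and f: "continuous_on D f" "discrete_map D f" "open_map_on D f"
    and A: "condition_A D f"
    and ball: "compact (closure (ball x0 \<epsilon>0))" "closure (ball x0 \<epsilon>0) \<subseteq> D"
    and \<gamma>: "continuous_on {0..1} \<gamma>" "\<gamma> 1 \<in> frontier (f ` ball x0 \<epsilon>0)"
    and x: "x \<in> D" "f x = \<gamma> 0"
  shows "\<exists>T \<alpha>. T \<in> {0..1} \<and> continuous_on {0..T} \<alpha> \<and> \<alpha> ` {0..T} \<subseteq> D \<and>
    (\<forall>t\<in>{0..T}. f (\<alpha> t) = \<gamma> t) \<and> \<alpha> 0 = x \<and> \<epsilon>0 \<le> dist (\<alpha> T) x0"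
proof -
  have "continuous_on {0..<1} \<gamma>" using \<gamma>(1) by (rule continuous_on_subset) auto
  then obtain c \<alpha> where max: "max_lifting D f \<gamma> 0 1 x c \<alpha>"
    using A x unfolding condition_A_def by force
  then have c: "0 < c" "c \<le> 1" and "\<alpha> 0 = x" and cont: "continuous_on {0..<c} \<alpha>"
    and \<alpha>D: "\<alpha> ` {0..<c} \<subseteq> D" and lift: "\<forall>t\<in>{0..<c}. f (\<alpha> t) = \<gamma> t"
    unfolding max_lifting_def is_lifting_def by auto
  show ?thesis
  proof (cases "\<exists>t\<in>{0..<c}. \<epsilon>0 \<le> dist (\<alpha> t) x0")
    case True
    then obtain t where t: "t \<in> {0..<c}" "\<epsilon>0 \<le> dist (\<alpha> t) x0" by blast
    then have "{0..t} \<subseteq> {0..<c}" by auto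
    then show ?thesis
      using t c \<open>\<alpha> 0 = x\<close> \<alpha>D lift continuous_on_subset[OF cont]
      by (intro exI[of _ t] exI[of _ \<alpha>]) auto
  next
    case False
    then have "\<alpha> ` {0..<c} \<subseteq> closure (ball x0 \<epsilon>0)"
      using closure_subset by (force simp: dist_commute)
    note extends = max_lifting_in_compact[OF D f(1,2) A ball \<gamma>(1) max this]
    then obtain p where p: "p \<in> closure (ball x0 \<epsilon>0)" "(\<alpha> \<longlongrightarrow> p) (at_left 1)" "f p = \<gamma> 1"
      by auto
    define \<alpha>' where "\<alpha>' t = (if t < 1 then \<alpha> t else p)" for t
    have "open (f ` ball x0 \<epsilon>0)"
      using f(3) ball(2) closure_subset unfolding open_map_on_def by blast
    then have "\<gamma> 1 \<notin> f ` ball x0 \<epsilon>0"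
      using \<gamma>(2) frontier_disjoint_eq by blast
    then have "p \<notin> ball x0 \<epsilon>0" using p(3) by (metis image_eqI)
    then have "\<epsilon>0 \<le> dist (\<alpha>' 1) x0" by (simp add: \<alpha>'_def dist_commute)
    moreover have "continuous_on {0..1} \<alpha>'"
      unfolding \<alpha>'_def using continuous_on_extend_at_left[OF c(1) cont] p(2) extends(1) by simp
    moreover have "\<alpha>' ` {0..1} \<subseteq> D" "\<forall>t\<in>{0..1}. f (\<alpha>' t) = \<gamma> t" "\<alpha>' 0 = x"
      using \<alpha>D lift p ball(2) extends(1) \<open>\<alpha> 0 = x\<close> by (auto simp: \<alpha>'_def)
    ultimately show ?thesis by (intro exI[of _ 1] exI[of _ \<alpha>']) auto
  qed
qed

lemma continuous_on_first_reach:
  fixes h :: "real \<Rightarrow> real"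
  assumes cont: "continuous_on {a..b} h" and "a \<le> b" "h a \<le> r" "r \<le> h b"
  shows "\<exists>t\<in>{a..b}. h t = r \<and> (\<forall>s\<in>{a..<t}. h s < r)"
proof -
  define S where "S = {a..b} \<inter> h -` {r..}"
  have "compact S" unfolding S_def compact_eq_bounded_closed
    by (auto intro: continuous_closed_preimage[OF cont] bounded_subset[of "{a..b}"])
  moreover have "b \<in> S" using assms by (simp add: S_def)
  ultimately obtain t where t: "t \<in> S" "\<forall>s\<in>S. t \<le> s"
    using compact_attains_inf by blast
  then have "t \<in> {a..b}" "r \<le> h t" by (auto simp: S_def)
  then obtain s where s: "a \<le> s" "s \<le> t" "h s = r"
    using IVT'[of h a r t] assms continuous_on_subset[OF cont, of "{a..t}"] by force
  then have "s \<in> S" using \<open>t \<in> {a..b}\<close> by (simp add: S_def)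
  with s t(2) have "h t = r" by (metis order_antisym)
  moreover have "h s < r" if "s \<in> {a..<t}" for s
    using t(2) that \<open>t \<in> {a..b}\<close> by (force simp: S_def)
  ultimately show ?thesis using \<open>t \<in> {a..b}\<close> by blast
qed

text \<open>First reach level \<open>r\<^sub>2\<close>, then go back to the last time before it at level \<open>r\<^sub>1\<close>
  (a first reach for the reflected function).\<close>
lemma continuous_on_crossing_interval:
  fixes h :: "real \<Rightarrow> real"
  assumes cont: "continuous_on {a..b} h" and "a \<le> b" "h a \<le> r1" "r1 < r2" "r2 \<le> h b"
  shows "\<exists>t1 t2. a \<le> t1 \<and> t1 < t2 \<and> t2 \<le> b \<and> h t1 = r1 \<and> h t2 = r2 \<and>
    (\<forall>t\<in>{t1<..<t2}. r1 < h t \<and> h t < r2)"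
proof -
  obtain t2 where t2: "t2 \<in> {a..b}" "h t2 = r2" and below: "\<forall>s\<in>{a..<t2}. h s < r2"
    using continuous_on_first_reach[OF cont \<open>a \<le> b\<close>, of r2] assms(3-5) by auto
  have "continuous_on {-t2..-a} (\<lambda>s. - h (- s))"
    by (intro continuous_intros continuous_on_compose2[OF cont]) (use t2 in auto)
  moreover have "- t2 \<le> - a" "- h (- (- t2)) \<le> - r1" "- r1 \<le> - h (- (- a))"
    using t2 assms(3,4) by auto
  ultimately obtain s where s: "s \<in> {-t2..-a}" "- h (- s) = - r1"
    and above: "\<forall>u\<in>{-t2..<s}. - h (- u) < - r1"
    using continuous_on_first_reach[of "- t2" "- a" "\<lambda>s. - h (- s)" "- r1"] by blast
  have "- s \<noteq> t2" using s(2) t2(2) \<open>r1 < r2\<close> by auto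
  then have "a \<le> - s" "- s < t2" "h (- s) = r1" using s by auto
  moreover have "r1 < h t \<and> h t < r2" if "t \<in> {- s<..<t2}" for t
  proof
    have "- t \<in> {-t2..<s}" using that by auto
    then show "r1 < h t" using above by fastforce
    show "h t < r2" using below that \<open>a \<le> - s\<close> by auto
  qed
  ultimately show ?thesis using t2 by (intro exI[of _ "- s"] exI[of _ t2]) auto
qed

lemma lifting_crosses_annulus:
  fixes f :: "'a::metric_space \<Rightarrow> 'b::metric_space"
  assumes D: "open D" and f: "continuous_on D f" "discrete_map D f" "open_map_on D f"
    and A: "condition_A D f"
    and ball: "compact (closure (ball x0 \<epsilon>0))" "closure (ball x0 \<epsilon>0) \<subseteq> D"
    and \<epsilon>: "0 < \<epsilon>" "\<epsilon> < \<epsilon>0"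
    and \<gamma>: "\<gamma> \<in> curve_family (f ` closure (ball x0 \<epsilon>)) (frontier (f ` ball x0 \<epsilon>0)) UNIV"
  shows "\<exists>\<delta> a b. 0 \<le> a \<and> a < b \<and> b \<le> 1 \<and>
     \<delta> \<in> curve_family (sphere_set x0 \<epsilon>) (sphere_set x0 \<epsilon>0) (annulus x0 \<epsilon> \<epsilon>0) \<and>
     \<delta> ` {0..1} \<subseteq> D \<and> (\<forall>s\<in>{0..1}. f (\<delta> s) = \<gamma> (a + s * (b - a)))"
proof -
  from \<gamma> have cont: "continuous_on {0..1} \<gamma>" and "\<gamma> 0 \<in> f ` closure (ball x0 \<epsilon>)"
    and endpoint: "\<gamma> 1 \<in> frontier (f ` ball x0 \<epsilon>0)"
    by (auto simp: curve_family_def)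
  then obtain x where x: "x \<in> closure (ball x0 \<epsilon>)" "f x = \<gamma> 0" by auto
  have "closure (ball x0 \<epsilon>) \<subseteq> cball x0 \<epsilon>"
    by (rule closure_minimal[OF ball_subset_cball closed_cball])
  then have "dist x x0 \<le> \<epsilon>" using x by (auto simp: dist_commute)
  have "closure (ball x0 \<epsilon>) \<subseteq> D"
    using closure_mono[of "ball x0 \<epsilon>" "ball x0 \<epsilon>0"] ball(2) \<epsilon> by force
  then obtain T \<alpha> where T: "T \<in> {0..1}" and \<alpha>: "continuous_on {0..T} \<alpha>" "\<alpha> ` {0..T} \<subseteq> D"
    "\<forall>t\<in>{0..T}. f (\<alpha> t) = \<gamma> t" "\<alpha> 0 = x" "\<epsilon>0 \<le> dist (\<alpha> T) x0"
    using lifting_reaches_sphere[OF D f A ball cont endpoint, of x] x by blast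
  have "continuous_on {0..T} (\<lambda>t. dist (\<alpha> t) x0)" by (intro continuous_intros \<alpha>(1))
  then obtain t1 t2 where t: "0 \<le> t1" "t1 < t2" "t2 \<le> T"
    and ends: "dist (\<alpha> t1) x0 = \<epsilon>" "dist (\<alpha> t2) x0 = \<epsilon>0"
    and between: "\<forall>t\<in>{t1<..<t2}. \<epsilon> < dist (\<alpha> t) x0 \<and> dist (\<alpha> t) x0 < \<epsilon>0"
    using continuous_on_crossing_interval[of 0 T "\<lambda>t. dist (\<alpha> t) x0" \<epsilon> \<epsilon>0]
      T \<alpha>(4,5) \<open>dist x x0 \<le> \<epsilon>\<close> \<epsilon> by auto
  define \<delta> where "\<delta> s = \<alpha> (t1 + s * (t2 - t1))" for s
  have in_T: "t1 + s * (t2 - t1) \<in> {0..T}" if "s \<in> {0..1}" for s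
    using affine_in_interval[OF that, of t1 t2] t by auto
  have "continuous_on {0..1} \<delta>"
    unfolding \<delta>_def by (rule continuous_on_compose2[OF \<alpha>(1)]) (auto intro!: continuous_intros in_T)
  moreover have "\<delta> s \<in> annulus x0 \<epsilon> \<epsilon>0" if "s \<in> {0<..<1}" for s
  proof -
    have "0 < s * (t2 - t1)" "s * (t2 - t1) < t2 - t1"
      using that t by (auto intro: mult_pos_pos mult_strict_right_mono[of s 1, simplified])
    then show ?thesis using between by (auto simp: \<delta>_def annulus_def)
  qed
  ultimately have "\<delta> \<in> curve_family (sphere_set x0 \<epsilon>) (sphere_set x0 \<epsilon>0) (annulus x0 \<epsilon> \<epsilon>0)"
    using ends by (simp add: curve_family_def \<delta>_def sphere_set_def)
  moreover have "\<delta> ` {0..1} \<subseteq> D" "\<forall>s\<in>{0..1}. f (\<delta> s) = \<gamma> (t1 + s * (t2 - t1))"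
    using \<alpha>(2,3) in_T by (auto simp: \<delta>_def)
  ultimately show ?thesis using t T by (intro exI[of _ \<delta>] exI[of _ t1] exI[of _ t2]) auto
qed

section \<open>Moduli of curve families\<close>

lemma modulus_mono_minorant:
  assumes "\<And>\<gamma>. \<gamma> \<in> \<Gamma> \<Longrightarrow> loc_rectifiable \<gamma> \<Longrightarrow>
    \<exists>\<delta>\<in>\<Gamma>'. loc_rectifiable \<delta> \<and> (\<forall>\<rho>. line_integral \<rho> \<delta> \<le> line_integral \<rho> \<gamma>)"
  shows "modulus \<mu> p \<Gamma> \<le> modulus \<mu> p \<Gamma>'"
proof -
  have "admissible \<rho> \<Gamma>" if "admissible \<rho> \<Gamma>'" for \<rho>
    using that assms unfolding admissible_def by (meson order_trans)
  then show ?thesis unfolding modulus_def by (intro INF_superset_mono) auto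
qed

lemma epow_mult_inverse:
  assumes "0 < i"
  shows "epow (v * inverse (ennreal i)) p = epow v p * inverse (epow (ennreal i) p)"
proof (cases "v = \<infinity>")
  case True
  then show ?thesis using assms by (simp add: epow_def ennreal_mult_eq_top_iff)
next
  case False
  then obtain y where y: "v = ennreal y" "0 \<le> y" by (cases v) auto
  then have "v * inverse (ennreal i) = ennreal (y / i)"
    using assms by (simp add: inverse_ennreal ennreal_mult'' divide_real_def)
  moreover have "(y / i) powr p = y powr p * inverse (i powr p)"
    using y assms powr_divide[of y i p] by (simp add: divide_real_def)
  ultimately show ?thesis using y assms
    by (simp add: epow_def inverse_ennreal ennreal_mult'')
qed

text \<open>The ring inequality for an unnormalised \<open>\<psi>\<close>: it is applied to the admissible
  \<open>\<eta> = \<psi> / I\<close>, where \<open>I = \<integral>\<^sub>r\<^sub>1\<^sup>r\<^sup>2 \<psi>\<close>.\<close>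
lemma ring_Q_mapping_modulus_le:
  assumes ring: "ring_Q_mapping \<mu> \<alpha> \<mu>' \<alpha>' D f Q x0" and r: "0 < r1" "r1 < r2"
    and annulus: "annulus x0 r1 r2 \<subseteq> D" and \<psi>: "\<psi> \<in> borel_measurable lebesgue"
    and I: "0 < (\<integral>\<^sup>+ t \<in> {r1<..<r2}. \<psi> t \<partial>lebesgue)" "(\<integral>\<^sup>+ t \<in> {r1<..<r2}. \<psi> t \<partial>lebesgue) < \<infinity>"
  shows "modulus \<mu>' \<alpha>' (image_family f D
      (curve_family (sphere_set x0 r1) (sphere_set x0 r2) (annulus x0 r1 r2)))
    \<le> (\<integral>\<^sup>+ x \<in> annulus x0 r1 r2. Q x * epow (\<psi> (dist x x0)) \<alpha> \<partial>\<mu>)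
      / epow (\<integral>\<^sup>+ t \<in> {r1<..<r2}. \<psi> t \<partial>lebesgue) \<alpha>"
proof -
  define I where "I = (\<integral>\<^sup>+ t \<in> {r1<..<r2}. \<psi> t \<partial>lebesgue)"
  obtain i where i: "I = ennreal i" "0 < i"
    using I unfolding I_def[symmetric] by (cases I) auto
  define \<eta> where "\<eta> r = \<psi> r * inverse I" for r
  have "\<eta> \<in> borel_measurable lebesgue" unfolding \<eta>_def using \<psi> by measurable
  moreover have "(\<integral>\<^sup>+ r \<in> {r1<..<r2}. \<eta> r \<partial>lebesgue) = 1"
  proof -
    have "(\<integral>\<^sup>+ r \<in> {r1<..<r2}. \<eta> r \<partial>lebesgue)
        = (\<integral>\<^sup>+ r. (\<psi> r * indicator {r1<..<r2} r) * inverse I \<partial>lebesgue)"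
      by (auto simp: \<eta>_def mult_ac intro!: nn_integral_cong)
    also have "\<dots> = I * inverse I"
      using \<psi> by (subst nn_integral_multc)
        (auto simp: I_def intro!: borel_measurable_times_ennreal borel_measurable_indicator)
    also have "\<dots> = 1" using i ennreal_divide_self[of I] by (simp add: divide_ennreal_def)
    finally show ?thesis .
  qed
  ultimately have "modulus \<mu>' \<alpha>' (image_family f D
      (curve_family (sphere_set x0 r1) (sphere_set x0 r2) (annulus x0 r1 r2)))
    \<le> (\<integral>\<^sup>+ x \<in> annulus x0 r1 r2 \<inter> D. Q x * epow (\<eta> (dist x x0)) \<alpha> \<partial>\<mu>)"
    using ring r unfolding ring_Q_mapping_def by auto
  also have "\<dots> = (\<integral>\<^sup>+ x. (Q x * epow (\<psi> (dist x x0)) \<alpha> * indicator (annulus x0 r1 r2) x)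
      * inverse (epow I \<alpha>) \<partial>\<mu>)"
    unfolding Int_absorb2[OF annulus] \<eta>_def i(1) epow_mult_inverse[OF i(2)]
    by (auto simp: mult_ac intro!: nn_integral_cong)
  also have "\<dots> \<le> (\<integral>\<^sup>+ x \<in> annulus x0 r1 r2. Q x * epow (\<psi> (dist x x0)) \<alpha> \<partial>\<mu>) * inverse (epow I \<alpha>)"
    by (rule nn_integral_multc_le) (use i in \<open>simp add: epow_def inverse_ennreal\<close>)
  finally show ?thesis by (simp add: divide_ennreal_def I_def)
qed

lemma modulus_le_image_family:
  fixes f :: "'a::metric_space \<Rightarrow> 'b::metric_space"
  assumes D: "open D" and f: "continuous_on D f" "discrete_map D f" "open_map_on D f"
    and A: "condition_A D f"
    and ball: "compact (closure (ball x0 \<epsilon>0))" "closure (ball x0 \<epsilon>0) \<subseteq> D"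
    and \<epsilon>: "0 < \<epsilon>" "\<epsilon> < \<epsilon>0"
  shows "modulus \<mu>' p (curve_family (f ` closure (ball x0 \<epsilon>)) (frontier (f ` ball x0 \<epsilon>0)) UNIV)
    \<le> modulus \<mu>' p (image_family f D
        (curve_family (sphere_set x0 \<epsilon>) (sphere_set x0 \<epsilon>0) (annulus x0 \<epsilon> \<epsilon>0)))"
proof (rule modulus_mono_minorant)
  fix \<gamma> assume \<gamma>: "\<gamma> \<in> curve_family (f ` closure (ball x0 \<epsilon>)) (frontier (f ` ball x0 \<epsilon>0)) UNIV"
    and rect: "loc_rectifiable \<gamma>"
  obtain \<delta> a b where ab: "0 \<le> a" "a < b" "b \<le> 1"
    and \<delta>: "\<delta> \<in> curve_family (sphere_set x0 \<epsilon>) (sphere_set x0 \<epsilon>0) (annulus x0 \<epsilon> \<epsilon>0)"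
      "\<delta> ` {0..1} \<subseteq> D" "\<forall>s\<in>{0..1}. f (\<delta> s) = \<gamma> (a + s * (b - a))"
    using lifting_crosses_annulus[OF D f A ball \<epsilon> \<gamma>] by blast
  have cont: "continuous_on {0..1} \<gamma>" using \<gamma> by (simp add: curve_family_def)
  have "f \<circ> \<delta> \<in> image_family f D (curve_family (sphere_set x0 \<epsilon>) (sphere_set x0 \<epsilon>0) (annulus x0 \<epsilon> \<epsilon>0))"
    using \<delta>(1,2) unfolding image_family_def by blast
  moreover have "loc_rectifiable (f \<circ> \<delta>)"
    using loc_rectifiable_subpath[OF rect ab] \<delta>(3) by simp
  moreover have "line_integral \<rho> (f \<circ> \<delta>) \<le> line_integral \<rho> \<gamma>" for \<rho>
    using line_integral_subpath_le[OF cont rect ab] \<delta>(3) by simp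
  ultimately show "\<exists>\<delta>\<in>image_family f D (curve_family (sphere_set x0 \<epsilon>) (sphere_set x0 \<epsilon>0) (annulus x0 \<epsilon> \<epsilon>0)).
      loc_rectifiable \<delta> \<and> (\<forall>\<rho>. line_integral \<rho> \<delta> \<le> line_integral \<rho> \<gamma>)"
    by blast
qed

theorem lemma3:
  fixes \<mu> :: "'a::metric_space measure" and \<mu>' :: "'b::metric_space measure"
    and \<alpha> \<alpha>' :: real and D :: "'a set" and f :: "'a \<Rightarrow> 'b" and Q :: "'a \<Rightarrow> ennreal"
    and x0 :: 'a and \<epsilon>0 \<epsilon>0' :: real and F :: "real \<Rightarrow> real \<Rightarrow> ennreal"
    and \<psi> :: "real \<Rightarrow> real \<Rightarrow> ennreal"
  assumes mu: "locally_finite_borel \<mu>" and mu': "locally_finite_borel \<mu>'"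
    and dimX: "hausdorff_dim (UNIV :: 'a set) = ereal \<alpha>" and alpha: "\<alpha> \<ge> 2"
    and dimX': "hausdorff_dim (UNIV :: 'b set) = ereal \<alpha>'" and alpha': "\<alpha>' \<ge> 2"
    and D: "open D" "connected D" "D \<noteq> {}"
    and Q: "Q \<in> borel_measurable (restrict_space \<mu> D)"
    and f_cont: "continuous_on D f"
    and f_open: "open_map_on D f" and f_discrete: "discrete_map D f"
    and x0: "x0 \<in> D"
    and ring: "ring_Q_mapping \<mu> \<alpha> \<mu>' \<alpha>' D f Q x0"
    and eps0: "0 < \<epsilon>0" "frontier D = {} \<or> \<epsilon>0 < infdist x0 (frontier D)"
    and cball: "compact (closure (ball x0 \<epsilon>0))" "closure (ball x0 \<epsilon>0) \<subseteq> D"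
    and eps0': "0 < \<epsilon>0'" "\<epsilon>0' < \<epsilon>0"
    and psi_meas: "\<And>\<epsilon>. \<epsilon> \<in> {0<..<\<epsilon>0'} \<Longrightarrow> \<psi> \<epsilon> \<in> borel_measurable lebesgue"
    and F: "\<And>\<epsilon>. \<epsilon> \<in> {0<..<\<epsilon>0'} \<Longrightarrow>
       (\<integral>\<^sup>+ x \<in> annulus x0 \<epsilon> \<epsilon>0. Q x * epow (\<psi> \<epsilon> (dist x x0)) \<alpha> \<partial>\<mu>) \<le> F \<epsilon> \<epsilon>0"
    and I_pos: "\<And>\<epsilon>. \<epsilon> \<in> {0<..<\<epsilon>0'} \<Longrightarrow> 0 < (\<integral>\<^sup>+ t \<in> {\<epsilon><..<\<epsilon>0}. \<psi> \<epsilon> t \<partial>lebesgue)"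
    and I_fin: "\<And>\<epsilon>. \<epsilon> \<in> {0<..<\<epsilon>0'} \<Longrightarrow> (\<integral>\<^sup>+ t \<in> {\<epsilon><..<\<epsilon>0}. \<psi> \<epsilon> t \<partial>lebesgue) < \<infinity>"
    and condA: "condition_A D f"
  shows "\<forall>\<epsilon> \<in> {0<..<\<epsilon>0'}.
     modulus \<mu>' \<alpha>' (curve_family (f ` closure (ball x0 \<epsilon>)) (frontier (f ` ball x0 \<epsilon>0)) UNIV)
       \<le> F \<epsilon> \<epsilon>0 / epow (\<integral>\<^sup>+ t \<in> {\<epsilon><..<\<epsilon>0}. \<psi> \<epsilon> t \<partial>lebesgue) \<alpha>"
proof
  fix \<epsilon> assume \<epsilon>: "\<epsilon> \<in> {0<..<\<epsilon>0'}"
  then have "0 < \<epsilon>" "\<epsilon> < \<epsilon>0" using eps0' by auto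
  have "annulus x0 \<epsilon> \<epsilon>0 \<subseteq> D"
    using cball(2) closure_subset by (force simp: annulus_def dist_commute)
  have "modulus \<mu>' \<alpha>' (curve_family (f ` closure (ball x0 \<epsilon>)) (frontier (f ` ball x0 \<epsilon>0)) UNIV)
      \<le> modulus \<mu>' \<alpha>' (image_family f D
          (curve_family (sphere_set x0 \<epsilon>) (sphere_set x0 \<epsilon>0) (annulus x0 \<epsilon> \<epsilon>0)))"
    by (rule modulus_le_image_family[OF D(1) f_cont f_discrete f_open condA cball])
      (fact \<open>0 < \<epsilon>\<close> \<open>\<epsilon> < \<epsilon>0\<close>)+
  also have "\<dots> \<le> (\<integral>\<^sup>+ x \<in> annulus x0 \<epsilon> \<epsilon>0. Q x * epow (\<psi> \<epsilon> (dist x x0)) \<alpha> \<partial>\<mu>)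
      / epow (\<integral>\<^sup>+ t \<in> {\<epsilon><..<\<epsilon>0}. \<psi> \<epsilon> t \<partial>lebesgue) \<alpha>"
    by (rule ring_Q_mapping_modulus_le[OF ring \<open>0 < \<epsilon>\<close> \<open>\<epsilon> < \<epsilon>0\<close> \<open>annulus x0 \<epsilon> \<epsilon>0 \<subseteq> D\<close>
          psi_meas I_pos I_fin, OF \<epsilon> \<epsilon> \<epsilon>])
  also have "\<dots> \<le> F \<epsilon> \<epsilon>0 / epow (\<integral>\<^sup>+ t \<in> {\<epsilon><..<\<epsilon>0}. \<psi> \<epsilon> t \<partial>lebesgue) \<alpha>"
    by (rule divide_right_mono_ennreal[OF F[OF \<epsilon>]])
  finally show "modulus \<mu>' \<alpha>' (curve_family (f ` closure (ball x0 \<epsilon>)) (frontier (f ` ball x0 \<epsilon>0)) UNIV)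
      \<le> F \<epsilon> \<epsilon>0 / epow (\<integral>\<^sup>+ t \<in> {\<epsilon><..<\<epsilon>0}. \<psi> \<epsilon> t \<partial>lebesgue) \<alpha>" .
qed

end
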